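(* Let $\gamma:\mathbb{R}\to\mathbb{R}^{nN}$ be a solution of $\dot p=\sum_{m\in\Lambda}u_m(t)X_m(p)$. Then for all $t_0,t\in\mathbb{R}$, \[ \psi(\gamma(t))=\psi(\gamma(t_0))+\int_{t_0}^t(Y\psi)(\gamma(s))\,\mathrm{d}s-(D_1\psi)(t_0,\gamma(t_0))+(D_1\psi)(t,\gamma(t))+\int_{t_0}^t(D_2\psi)(s,\gamma(s))\,\mathrm{d}s, \] where \[ (D_1\psi)(s,p)=-\sum_{m_1\in\Lambda}\widetilde{UV}_{m_1}(s)(X_{m_1}\psi)(p)-\sum_{m_1,m_2\in\Lambda}\widetilde{UV}_{m_2,m_1}(s)\,(X_{m_2}(X_{m_1}\psi))(p), \] \[ (D_2\psi)(s,p)=\sum_{m_1,m_2,m_3\in\Lambda}u_{m_3}(s)\,\widetilde{UV}_{m_2,m_1}(s)\,(X_{m_3}(X_{m_2}(X_{m_1}\psi)))(p). \]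
   Context: $G=(V,E)$ is an undirected graph with $V=\{1,\ldots,N\}$ and nonempty edge set $E$ of two-element subsets (edges $ij$); $d_{ij}\geq0$ for $ij\in E$. For $p=(p_1,\ldots,p_N)\in\mathbb{R}^{nN}$: $\psi_i(p)=\frac14\sum_{j:\,ij\in E}(\|p_j-p_i\|^2-d_{ij}^2)^2$ and $\psi(p)=\frac14\sum_{ij\in E}(\|p_j-p_i\|^2-d_{ij}^2)^2$. For each $i$, $b_{i,1},\ldots,b_{i,n}$ is an orthonormal basis of $\mathbb{R}^n$; $B_{i,k}$ is the constant vector field on $\mathbb{R}^{nN}$ with $i$-th block $b_{i,k}$ and other blocks $0$. $\Lambda$ is the set of triples $m=(i,k,\nu)$ with $i\in\{1,\ldots,N\}$, $k\in\{1,\ldots,n\}$, $\nu\in\{1,2\}$; $X_m(p):=h_\nu(\psi_i(p))B_{i,k}(p)$. The functions $h_1,h_2:\mathbb{R}\to\mathbb{R}$ satisfy, for $\nu=1,2$: (i) $h_\nu(y)=0$ for $y\leq 0$; (ii) $h_\nu$ is bounded and of class $C^2$ on $(0,\infty)$; (iii) $h_\nu(y)/y$ remains bounded as $y\downarrow 0$; (iv) $h_\nu'(y)$ remains bounded as $y\downarrow0$; (v) $h_\nu''(y)\,y$ remains bounded as $y\downarrow 0$; (vi) there exist $r',c'>0$ with $h_2'(y)h_1(y)-h_1'(y)h_2(y)\leq -c'y$ for all $y\in(0,r']$. (With these, $X_m$, $X_{m_1}\psi$, $X_{m_2}(X_{m_1}\psi)$ are of class $C^1$, $C^2$, $C^1$,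 and $X_{m_3}(X_{m_2}(X_{m_1}\psi))$ is continuous; $Xf=\mathrm{D}f\,X$ denotes Lie derivative.) The $\omega_{i,k}$ are $nN$ pairwise distinct positive reals, $\varphi_{i,k}\in\mathbb{R}$, and $u_{(i,k,1)}(t)=\sqrt{\omega_{i,k}}\cos(\omega_{i,k}t+\varphi_{i,k})$, $u_{(i,k,2)}(t)=\sqrt{\omega_{i,k}}\sin(\omega_{i,k}t+\varphi_{i,k})$. For $m=(i,k,\nu)$ let $\Omega(m)=\{\omega_{i,k},-\omega_{i,k}\}$, and $\eta_{\pm\omega_{i,k},m}=\sqrt{\omega_{i,k}}e^{\pm\mathrm{i}\varphi_{i,k}}/2$ if $\nu=1$, $\eta_{\pm\omega_{i,k},m}=\pm\sqrt{\omega_{i,k}}e^{\pm\mathrm{i}\varphi_{i,k}}/(2\mathrm{i})$ if $\nu=2$ (so $u_m(t)=\sum_{\omega\in\Omega(m)}\eta_{\omega,m}e^{\mathrm{i}\omega t}$). Define $\widetilde{UV}_m(t)=-\sum_{\omega\in\Omega(m)}\frac{\eta_{\omega,m}}{\mathrm{i}\omega}e^{\mathrm{i}\omega t}$ and $\widetilde{UV}_{m',m}(t)=\sum_{(\omega',\omega)\in\Omega(m')\times\Omega(m),\,\omega'+\omega\neq0}\frac{\eta_{\omega',m'}\eta_{\omega,m}}{\mathrm{i}^2\omega(\omega'+\omega)}e^{\mathrm{i}(\omega'+\omega)t}$. Finally $Y=\frac12\sum_{i=1}^N\sum_{k=1}^n[X_{(i,k,1)},X_{(i,k,2)}]$ with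 Lie bracket $[X,Z]=\mathrm{D}Z\,X-\mathrm{D}X\,Z$, and $Y\psi=\mathrm{D}\psi\,Y$. *)

theory Defs
  imports "HOL-Analysis.Analysis"
begin

(* Points p in R^{nN} are elements of (real^'n)^'N: block p$i is the position of vertex i.
   Vertices = the finite type 'N, coordinates/basis indices k = the finite type 'n. *)

definition Lambda :: "('N::finite \<times> 'n::finite \<times> nat) set" where
  "Lambda = UNIV \<times> UNIV \<times> {1,2}"

definition edge_dist2 :: "(real^'n::finite)^'N::finite \<Rightarrow> 'N set \<Rightarrow> real" where
  "edge_dist2 p e = (SOME r. \<exists>i j. e = {i,j} \<and> r = (norm (p$j - p$i))\<^sup>2)"

definition psi_i :: "'N set set \<Rightarrow> ('N set \<Rightarrow> real) \<Rightarrow> (real^'n::finite)^'N::finite \<Rightarrow> 'N \<Rightarrow> real" where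
  "psi_i E d p i = (1/4) * (\<Sum>j\<in>{j. {i,j} \<in> E}. ((norm (p$j - p$i))\<^sup>2 - (d {i,j})\<^sup>2)\<^sup>2)"

definition psi :: "'N set set \<Rightarrow> ('N set \<Rightarrow> real) \<Rightarrow> (real^'n::finite)^'N::finite \<Rightarrow> real" where
  "psi E d p = (1/4) * (\<Sum>e\<in>E. (edge_dist2 p e - (d e)\<^sup>2)\<^sup>2)"

definition Bvec :: "('N::finite \<Rightarrow> 'n::finite \<Rightarrow> real^'n) \<Rightarrow> 'N \<Rightarrow> 'n \<Rightarrow> (real^'n)^'N" where
  "Bvec b i k = (\<chi> j. if j = i then b i k else 0)"

definition Xf :: "(nat \<Rightarrow> real \<Rightarrow> real) \<Rightarrow> ('N::finite \<Rightarrow> 'n::finite \<Rightarrow> real^'n) \<Rightarrow> 'N set set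
    \<Rightarrow> ('N set \<Rightarrow> real) \<Rightarrow> ('N \<times> 'n \<times> nat) \<Rightarrow> (real^'n)^'N \<Rightarrow> (real^'n)^'N" where
  "Xf h b E d m p = (case m of (i,k,\<nu>) \<Rightarrow> h \<nu> (psi_i E d p i) *\<^sub>R Bvec b i k)"

definition lie :: "('a::real_normed_vector \<Rightarrow> 'a) \<Rightarrow> ('a \<Rightarrow> real) \<Rightarrow> 'a \<Rightarrow> real" where
  "lie X f p = frechet_derivative f (at p) (X p)"

definition lie_bracket :: "('a::real_normed_vector \<Rightarrow> 'a) \<Rightarrow> ('a \<Rightarrow> 'a) \<Rightarrow> 'a \<Rightarrow> 'a" where
  "lie_bracket X Z p = frechet_derivative Z (at p) (X p) - frechet_derivative X (at p) (Z p)"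

definition Yf :: "(nat \<Rightarrow> real \<Rightarrow> real) \<Rightarrow> ('N::finite \<Rightarrow> 'n::finite \<Rightarrow> real^'n) \<Rightarrow> 'N set set
    \<Rightarrow> ('N set \<Rightarrow> real) \<Rightarrow> (real^'n)^'N \<Rightarrow> (real^'n)^'N" where
  "Yf h b E d p = (1/2) *\<^sub>R (\<Sum>i\<in>UNIV. \<Sum>k\<in>UNIV.
      lie_bracket (Xf h b E d (i,k,1)) (Xf h b E d (i,k,2)) p)"

definition u :: "('N \<Rightarrow> 'n \<Rightarrow> real) \<Rightarrow> ('N \<Rightarrow> 'n \<Rightarrow> real) \<Rightarrow> ('N \<times> 'n \<times> nat) \<Rightarrow> real \<Rightarrow> real" where
  "u \<omega> \<phi> m t = (case m of (i,k,\<nu>) \<Rightarrow>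
     (if \<nu> = 1 then sqrt (\<omega> i k) * cos (\<omega> i k * t + \<phi> i k)
      else sqrt (\<omega> i k) * sin (\<omega> i k * t + \<phi> i k)))"

definition Omega :: "('N \<Rightarrow> 'n \<Rightarrow> real) \<Rightarrow> ('N \<times> 'n \<times> nat) \<Rightarrow> real set" where
  "Omega \<omega> m = (case m of (i,k,\<nu>) \<Rightarrow> {\<omega> i k, - \<omega> i k})"

definition eta :: "('N \<Rightarrow> 'n \<Rightarrow> real) \<Rightarrow> ('N \<Rightarrow> 'n \<Rightarrow> real) \<Rightarrow> real \<Rightarrow> ('N \<times> 'n \<times> nat) \<Rightarrow> complex" where
  "eta \<omega> \<phi> w m = (case m of (i,k,\<nu>) \<Rightarrow>
     (if \<nu> = 1 then complex_of_real (sqrt (\<omega> i k)) * exp (\<i> * complex_of_real (sgn w * \<phi> i k)) / 2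
      else complex_of_real (sgn w) * complex_of_real (sqrt (\<omega> i k))
             * exp (\<i> * complex_of_real (sgn w * \<phi> i k)) / (2 * \<i>)))"

definition UV1 :: "('N \<Rightarrow> 'n \<Rightarrow> real) \<Rightarrow> ('N \<Rightarrow> 'n \<Rightarrow> real) \<Rightarrow> ('N \<times> 'n \<times> nat) \<Rightarrow> real \<Rightarrow> complex" where
  "UV1 \<omega> \<phi> m t = - (\<Sum>w\<in>Omega \<omega> m.
      eta \<omega> \<phi> w m / (\<i> * complex_of_real w) * exp (\<i> * complex_of_real (w * t)))"

definition UV2 :: "('N \<Rightarrow> 'n \<Rightarrow> real) \<Rightarrow> ('N \<Rightarrow> 'n \<Rightarrow> real) \<Rightarrow> ('N \<times> 'n \<times> nat) \<Rightarrow> ('N \<times> 'n \<times> nat)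
    \<Rightarrow> real \<Rightarrow> complex" where
  "UV2 \<omega> \<phi> m' m t = (\<Sum>(w',w)\<in>{(w',w). w' \<in> Omega \<omega> m' \<and> w \<in> Omega \<omega> m \<and> w' + w \<noteq> 0}.
      eta \<omega> \<phi> w' m' * eta \<omega> \<phi> w m / (\<i>\<^sup>2 * complex_of_real w * complex_of_real (w' + w))
      * exp (\<i> * complex_of_real ((w' + w) * t)))"

definition D1psi where
  "D1psi h b E d \<omega> \<phi> s p =
     - (\<Sum>m1\<in>Lambda. UV1 \<omega> \<phi> m1 s * complex_of_real (lie (Xf h b E d m1) (psi E d) p))
     - (\<Sum>m1\<in>Lambda. \<Sum>m2\<in>Lambda. UV2 \<omega> \<phi> m2 m1 s *
          complex_of_real (lie (Xf h b E d m2) (lie (Xf h b E d m1) (psi E d)) p))"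

definition D2psi where
  "D2psi h b E d \<omega> \<phi> s p =
     (\<Sum>m1\<in>Lambda. \<Sum>m2\<in>Lambda. \<Sum>m3\<in>Lambda.
        complex_of_real (u \<omega> \<phi> m3 s) * UV2 \<omega> \<phi> m2 m1 s *
        complex_of_real (lie (Xf h b E d m3) (lie (Xf h b E d m2) (lie (Xf h b E d m1) (psi E d))) p))"

definition C2_pos :: "(real \<Rightarrow> real) \<Rightarrow> bool" where
  "C2_pos f \<longleftrightarrow> (\<forall>y>0. f differentiable (at y) \<and> deriv f differentiable (at y))
      \<and> continuous_on {0<..} (deriv (deriv f))"

end

theory Submission
  imports Defs
begin

(* Differentiate G(s) = \<psi>(\<gamma> s) - D\<^sub>1\<psi>(s, \<gamma> s) along the solution. By the chain rule
   (\<psi> \<circ> \<gamma>)' = \<Sum>\<^sub>m u\<^sub>m (X\<^sub>m \<psi>)(\<gamma>), and this is cancelled by the term coming from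
   UV\<^sub>m' = -u\<^sub>m. The second order terms X\<^sub>m\<^sub>2 X\<^sub>m\<^sub>1 \<psi> then carry the coefficient
   UV\<^sub>m\<^sub>1 u\<^sub>m\<^sub>2 + UV\<^sub>m\<^sub>2\<^sub>,\<^sub>m\<^sub>1'; multiplying out the Fourier sums, everything cancels except the
   resonant frequency pairs \<omega>' + \<omega> = 0. As the \<omega>\<^sub>i\<^sub>,\<^sub>k are distinct, these only occur for
   m\<^sub>1, m\<^sub>2 = (i,k,1), (i,k,2), with the constants -1/2 and 1/2, and give exactly Y\<psi>. The third
   order terms are D\<^sub>2\<psi>, and the fundamental theorem of calculus gives the identity.

   The analytic difficulty is regularity: h\<^sub>\<nu> need not be differentiable at 0. But \<psi>\<^sub>i \<ge> 0
   vanishes to second order wherever it vanishes, and the growth conditions on h\<^sub>\<nu> near 0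
   then make h\<^sub>\<nu> \<circ> \<psi>\<^sub>i differentiable with vanishing derivative there. *)

section \<open>Composing with functions singular at zero\<close>

lemma has_derivative_zero_if_quadratic_bound:
  fixes f :: "'a::real_normed_vector \<Rightarrow> real"
  assumes f0: "f p = 0" and ev: "eventually (\<lambda>x. \<bar>f x\<bar> \<le> K * (norm (x - p))\<^sup>2) (at p)"
  shows "(f has_derivative (\<lambda>v. 0)) (at p)"
proof -
  have "((\<lambda>y. norm (f y - f p - 0) / norm (y - p)) \<longlongrightarrow> 0) (at p)"
  proof (rule Lim_null_comparison[where g="\<lambda>y. \<bar>K\<bar> * norm (y - p)"])
    show "\<forall>\<^sub>F x in at p. norm (norm (f x - f p - 0) / norm (x - p)) \<le> \<bar>K\<bar> * norm (x - p)"
      using ev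
    proof (rule eventually_mono)
      fix x assume a: "\<bar>f x\<bar> \<le> K * (norm (x - p))\<^sup>2"
      show "norm (norm (f x - f p - 0) / norm (x - p)) \<le> \<bar>K\<bar> * norm (x - p)"
      proof (cases "x = p")
        case False
        then have n: "norm (x - p) > 0" by simp
        have "\<bar>f x\<bar> \<le> \<bar>K\<bar> * norm (x - p) * norm (x - p)"
          using a by (smt (verit, best) mult_right_mono n power2_eq_square mult.assoc abs_ge_self)
        then show ?thesis using n f0 by (simp add: divide_le_eq)
      qed simp
    qed
    show "((\<lambda>y. \<bar>K\<bar> * norm (y - p)) \<longlongrightarrow> 0) (at p)"
      by (rule tendsto_eq_intros refl | simp)+
  qed
  then show ?thesis by (simp add: has_derivative_iff_norm)
qed

lemma eventually_bounded_comp_at_zero: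
  fixes \<Psi> :: "'a::metric_space \<Rightarrow> real"
  assumes g: "\<exists>C. eventually (\<lambda>y. \<bar>g y\<bar> \<le> C) (at_right 0)"
    and cont: "isCont \<Psi> p" and zero: "\<Psi> p = 0"
  obtains C where "eventually (\<lambda>x. \<Psi> x > 0 \<longrightarrow> \<bar>g (\<Psi> x)\<bar> \<le> C) (at p)"
proof -
  obtain C \<delta> where "\<delta> > 0" and C: "\<And>y. 0 < y \<Longrightarrow> y < \<delta> \<Longrightarrow> \<bar>g y\<bar> \<le> C"
    using g unfolding eventually_at_right_field by force
  then have "eventually (\<lambda>x. \<Psi> x < \<delta>) (at p)"
    using cont zero by (metis isCont_def order_tendstoD(2))
  then show ?thesis
    by (rule that[OF eventually_mono]) (use C in auto)
qed

lemma eventually_le_mult_of_isCont: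
  fixes S :: "'a::metric_space \<Rightarrow> real"
  assumes "isCont S p" "\<forall>x. \<bar>P x\<bar> \<le> \<Psi> x * S x" "\<forall>x. \<Psi> x \<ge> 0"
  shows "\<exists>K. eventually (\<lambda>x. \<bar>P x\<bar> \<le> K * \<Psi> x) (at p)"
proof -
  have "eventually (\<lambda>x. S x < S p + 1) (at p)"
    using assms(1) unfolding isCont_def by (rule order_tendstoD(2)) simp
  then have "eventually (\<lambda>x. \<bar>P x\<bar> \<le> (S p + 1) * \<Psi> x) (at p)"
  proof eventually_elim
    case (elim x)
    have "\<bar>P x\<bar> \<le> \<Psi> x * S x" using assms(2) by blast
    also have "\<dots> \<le> \<Psi> x * (S p + 1)" using elim assms(3) by (intro mult_left_mono) auto
    finally show ?case by (simp add: mult.commute)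
  qed
  then show ?thesis by blast
qed

lemma has_derivative_imp_eventually_lipschitz:
  fixes f :: "'a::real_normed_vector \<Rightarrow> real"
  assumes "(f has_derivative f') (at p)"
  shows "\<exists>L. eventually (\<lambda>x. \<bar>f x - f p\<bar> \<le> L * norm (x - p)) (at p)"
proof -
  have bl: "bounded_linear f'"
    and lim: "((\<lambda>y. norm ((f y - f p) - f' (y - p)) / norm (y - p)) \<longlongrightarrow> 0) (at p)"
    using assms by (auto simp: has_derivative_iff_norm)
  obtain B where B: "\<And>x. norm (f' x) \<le> norm x * B"
    using bounded_linear.bounded[OF bl] by blast
  have "eventually (\<lambda>y. norm ((f y - f p) - f' (y - p)) / norm (y - p) < 1) (at p)"
    using lim by (rule order_tendstoD(2)) simp
  moreover have "eventually (\<lambda>y. y \<noteq> p) (at p)" by (simp add: eventually_at_filter)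
  ultimately have "eventually (\<lambda>x. \<bar>f x - f p\<bar> \<le> (B + 1) * norm (x - p)) (at p)"
  proof eventually_elim
    case (elim y)
    then have n: "norm (y - p) > 0" by simp
    have "\<bar>f y - f p - f' (y - p)\<bar> \<le> norm (y - p)"
      using elim(1) n by (simp add: divide_less_eq)
    moreover have "\<bar>f' (y - p)\<bar> \<le> norm (y - p) * B" using B[of "y - p"] by simp
    ultimately show ?case by (simp add: algebra_simps)
  qed
  then show ?thesis by blast
qed

lemma has_derivative_comp_nonneg:
  fixes \<Psi> :: "'a::real_normed_vector \<Rightarrow> real"
  assumes h_zero: "\<forall>y\<le>0. h y = 0"
    and h_diff: "\<forall>y>0. h differentiable (at y)"
    and h_div: "\<exists>C. eventually (\<lambda>y. \<bar>h y / y\<bar> \<le> C) (at_right 0)"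
    and nonneg: "\<forall>x. \<Psi> x \<ge> 0"
    and D: "(\<Psi> has_derivative D\<Psi>) (at p)"
    and D_zero: "\<Psi> p = 0 \<Longrightarrow> \<forall>v. D\<Psi> v = 0"
    and quad: "\<Psi> p = 0 \<Longrightarrow> \<exists>K. eventually (\<lambda>x. \<Psi> x \<le> K * (norm (x - p))\<^sup>2) (at p)"
  shows "((\<lambda>x. h (\<Psi> x)) has_derivative (\<lambda>v. deriv h (\<Psi> p) * D\<Psi> v)) (at p)"
proof (cases "\<Psi> p > 0")
  case True
  then have "(h has_real_derivative deriv h (\<Psi> p)) (at (\<Psi> p))"
    using h_diff DERIV_deriv_iff_real_differentiable by blast
  from has_derivative_compose[OF D this[unfolded has_field_derivative_def]]
  show ?thesis by (simp add: mult.commute)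
next
  case False
  then have p0: "\<Psi> p = 0" using nonneg by (simp add: order_less_le)
  have cont: "isCont \<Psi> p" using D has_derivative_continuous by blast
  obtain C where C: "eventually (\<lambda>x. \<Psi> x > 0 \<longrightarrow> \<bar>h (\<Psi> x) / \<Psi> x\<bar> \<le> C) (at p)"
    using eventually_bounded_comp_at_zero[OF h_div cont p0] by blast
  obtain K where K: "eventually (\<lambda>x. \<Psi> x \<le> K * (norm (x - p))\<^sup>2) (at p)" using quad p0 by blast
  have "((\<lambda>x. h (\<Psi> x)) has_derivative (\<lambda>v. 0)) (at p)"
  proof (rule has_derivative_zero_if_quadratic_bound[where K="\<bar>C\<bar> * K"])
    show "h (\<Psi> p) = 0" using p0 h_zero by simp
    show "\<forall>\<^sub>F x in at p. \<bar>h (\<Psi> x)\<bar> \<le> \<bar>C\<bar> * K * (norm (x - p))\<^sup>2"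
      using K C
    proof eventually_elim
      case (elim x)
      show ?case
      proof (cases "\<Psi> x = 0")
        case True
        then have "K * (norm (x - p))\<^sup>2 \<ge> 0" using elim(1) by simp
        then show ?thesis using True h_zero by (simp add: mult.assoc)
      next
        case False
        then have pos: "\<Psi> x > 0" using nonneg by (simp add: order_less_le)
        have "\<bar>h (\<Psi> x)\<bar> = \<bar>h (\<Psi> x) / \<Psi> x\<bar> * \<Psi> x" using pos by (simp add: abs_div)
        also have "\<dots> \<le> \<bar>C\<bar> * \<Psi> x" using elim(2) pos
          by (intro mult_right_mono) auto
        also have "\<dots> \<le> \<bar>C\<bar> * (K * (norm (x - p))\<^sup>2)" using elim(1) by (intro mult_left_mono) auto
        finally show ?thesis by (simp add: mult.assoc)
      qed
    qed
  qed
  then show ?thesis using D_zero[OF p0] by simp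
qed

lemma has_derivative_deriv_comp_mult_nonneg:
  fixes \<Psi> :: "'a::real_normed_vector \<Rightarrow> real"
  assumes h_diff: "\<forall>y>0. deriv h differentiable (at y)"
    and h_bound: "\<exists>C. eventually (\<lambda>y. \<bar>deriv h y\<bar> \<le> C) (at_right 0)"
    and nonneg: "\<forall>x. \<Psi> x \<ge> 0"
    and D: "(\<Psi> has_derivative D\<Psi>) (at p)"
    and D_zero: "\<Psi> p = 0 \<Longrightarrow> \<forall>v. D\<Psi> v = 0"
    and quad: "\<Psi> p = 0 \<Longrightarrow> \<exists>K. eventually (\<lambda>x. \<Psi> x \<le> K * (norm (x - p))\<^sup>2) (at p)"
    and PD: "(P has_derivative DP) (at p)"
    and P_zero: "\<Psi> p = 0 \<Longrightarrow> P p = 0 \<and> (\<forall>v. DP v = 0)"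
    and P_bound: "\<Psi> p = 0 \<Longrightarrow> \<exists>K. eventually (\<lambda>x. \<bar>P x\<bar> \<le> K * \<Psi> x) (at p)"
  shows "((\<lambda>x. deriv h (\<Psi> x) * P x) has_derivative
           (\<lambda>v. deriv (deriv h) (\<Psi> p) * D\<Psi> v * P p + deriv h (\<Psi> p) * DP v)) (at p)"
proof (cases "\<Psi> p > 0")
  case True
  then have "(deriv h has_real_derivative deriv (deriv h) (\<Psi> p)) (at (\<Psi> p))"
    using h_diff DERIV_deriv_iff_real_differentiable by blast
  from has_derivative_compose[OF D this[unfolded has_field_derivative_def]]
  have "((\<lambda>x. deriv h (\<Psi> x)) has_derivative (\<lambda>x. deriv (deriv h) (\<Psi> p) * D\<Psi> x)) (at p)" .
  from has_derivative_mult[OF this PD]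
  show ?thesis by (simp add: algebra_simps)
next
  case False
  then have p0: "\<Psi> p = 0" using nonneg by (simp add: order_less_le)
  have cont: "isCont \<Psi> p" using D has_derivative_continuous by blast
  obtain C where C: "eventually (\<lambda>x. \<Psi> x > 0 \<longrightarrow> \<bar>deriv h (\<Psi> x)\<bar> \<le> C) (at p)"
    using eventually_bounded_comp_at_zero[OF h_bound cont p0] by blast
  obtain K where K: "eventually (\<lambda>x. \<Psi> x \<le> K * (norm (x - p))\<^sup>2) (at p)" using quad p0 by blast
  obtain K2 where K2: "eventually (\<lambda>x. \<bar>P x\<bar> \<le> K2 * \<Psi> x) (at p)" using P_bound p0 by blast
  have "((\<lambda>x. deriv h (\<Psi> x) * P x) has_derivative (\<lambda>v. 0)) (at p)"
  proof (rule has_derivative_zero_if_quadratic_bound[where K="\<bar>C\<bar> * \<bar>K2\<bar> * K"])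
    show "deriv h (\<Psi> p) * P p = 0" using p0 P_zero by simp
    show "\<forall>\<^sub>F x in at p. \<bar>deriv h (\<Psi> x) * P x\<bar> \<le> \<bar>C\<bar> * \<bar>K2\<bar> * K * (norm (x - p))\<^sup>2"
      using K K2 C
    proof eventually_elim
      case (elim x)
      have Kn: "K * (norm (x - p))\<^sup>2 \<ge> 0" using elim(1) nonneg[rule_format, of x] by linarith
      show ?case
      proof (cases "\<Psi> x = 0")
        case True then have "P x = 0" using elim(2) by simp
        then show ?thesis using Kn by (simp add: mult.assoc)
      next
        case False
        then have pos: "\<Psi> x > 0" using nonneg by (simp add: order_less_le)
        have "\<bar>deriv h (\<Psi> x) * P x\<bar> \<le> \<bar>C\<bar> * (\<bar>K2\<bar> * \<Psi> x)"
          unfolding abs_mult using elim(3) elim(2) pos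
          by (intro mult_mono) (auto intro: order.trans[OF _ mult_right_mono[of K2 "\<bar>K2\<bar>"]])
        also have "\<dots> \<le> \<bar>C\<bar> * (\<bar>K2\<bar> * (K * (norm (x - p))\<^sup>2))" using elim(1)
          by (intro mult_left_mono) auto
        finally show ?thesis by (simp add: mult.assoc)
      qed
    qed
  qed
  then show ?thesis using D_zero[OF p0] P_zero[OF p0] by simp
qed

lemma isCont_deriv_comp_mult_nonneg:
  fixes \<Psi> :: "'a::real_normed_vector \<Rightarrow> real"
  assumes h_diff: "\<forall>y>0. deriv h differentiable (at y)"
    and h_bound: "\<exists>C. eventually (\<lambda>y. \<bar>deriv h y\<bar> \<le> C) (at_right 0)"
    and nonneg: "\<forall>x. \<Psi> x \<ge> 0"
    and cont: "isCont \<Psi> p" and Q_cont: "isCont Q p"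
    and Q_zero: "\<forall>x. \<Psi> x = 0 \<longrightarrow> Q x = 0"
  shows "isCont (\<lambda>x. deriv h (\<Psi> x) * Q x) p"
proof (cases "\<Psi> p > 0")
  case True
  then have "isCont (deriv h) (\<Psi> p)" using h_diff differentiable_imp_continuous_within by blast
  then have "isCont (\<lambda>x. deriv h (\<Psi> x)) p" using cont by (rule isCont_o2[rotated])
  then show ?thesis using Q_cont by (intro isCont_mult)
next
  case False
  then have p0: "\<Psi> p = 0" using nonneg by (simp add: order_less_le)
  obtain C where C: "eventually (\<lambda>x. \<Psi> x > 0 \<longrightarrow> \<bar>deriv h (\<Psi> x)\<bar> \<le> C) (at p)"
    using eventually_bounded_comp_at_zero[OF h_bound cont p0] by blast
  have Q0: "Q p = 0" using Q_zero p0 by simp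
  have "((\<lambda>x. deriv h (\<Psi> x) * Q x) \<longlongrightarrow> 0) (at p)"
  proof (rule Lim_null_comparison[where g="\<lambda>x. \<bar>C\<bar> * \<bar>Q x\<bar>"])
    show "\<forall>\<^sub>F x in at p. norm (deriv h (\<Psi> x) * Q x) \<le> \<bar>C\<bar> * \<bar>Q x\<bar>"
      using C
    proof eventually_elim
      case (elim x)
      show ?case
      proof (cases "\<Psi> x = 0")
        case True then show ?thesis using Q_zero by simp
      next
        case False
        then have pos: "\<Psi> x > 0" using nonneg by (simp add: order_less_le)
        show ?thesis unfolding real_norm_def abs_mult using elim pos
          by (intro mult_right_mono) auto
      qed
    qed
    have "((\<lambda>x. \<bar>C\<bar> * \<bar>Q x\<bar>) \<longlongrightarrow> \<bar>C\<bar> * \<bar>Q p\<bar>) (at p)"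
      using Q_cont unfolding isCont_def by (intro tendsto_intros)
    then show "((\<lambda>x. \<bar>C\<bar> * \<bar>Q x\<bar>) \<longlongrightarrow> 0) (at p)" using Q0 by simp
  qed
  then show ?thesis using Q0 by (simp add: isCont_def)
qed

lemma abs_mult_le_sqrt_mult:
  fixes a r y s B C :: real
  assumes y: "y > 0" and a: "\<bar>a * y\<bar> \<le> C" and r: "\<bar>r\<bar> \<le> y * sqrt y * s" and s: "s \<le> B"
  shows "\<bar>a * r\<bar> \<le> \<bar>C\<bar> * sqrt y * \<bar>B\<bar>"
proof -
  have "0 \<le> y * sqrt y * s" using r by (meson abs_ge_zero order_trans)
  moreover have "y * sqrt y > 0" using y by simp
  ultimately have s0: "s \<ge> 0" by (simp add: zero_le_mult_iff)
  have "\<bar>a * r\<bar> \<le> \<bar>a\<bar> * (y * sqrt y * s)"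
    unfolding abs_mult by (rule mult_left_mono[OF r abs_ge_zero])
  also have "\<dots> = \<bar>a * y\<bar> * sqrt y * s"
    using y by (simp add: abs_mult mult.assoc)
  also have "\<dots> \<le> \<bar>C\<bar> * sqrt y * \<bar>B\<bar>"
    using a s s0 y by (intro mult_mono) auto
  finally show ?thesis .
qed

lemma isCont_deriv2_comp_mult_nonneg:
  fixes \<Psi> :: "'a::real_normed_vector \<Rightarrow> real"
  assumes h_cont: "continuous_on {0<..} (deriv (deriv h))"
    and h_bound: "\<exists>C. eventually (\<lambda>y. \<bar>deriv (deriv h) y * y\<bar> \<le> C) (at_right 0)"
    and nonneg: "\<forall>x. \<Psi> x \<ge> 0"
    and cont: "isCont \<Psi> p" and R_cont: "isCont R p" and S_cont: "isCont S p"
    and R_bound: "\<forall>x. \<bar>R x\<bar> \<le> \<Psi> x * sqrt (\<Psi> x) * S x"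
  shows "isCont (\<lambda>x. deriv (deriv h) (\<Psi> x) * R x) p"
proof (cases "\<Psi> p > 0")
  case True
  then have "isCont (deriv (deriv h)) (\<Psi> p)" using h_cont
    by (simp add: continuous_on_eq_continuous_at)
  then have "isCont (\<lambda>x. deriv (deriv h) (\<Psi> x)) p" using cont by (rule isCont_o2[rotated])
  then show ?thesis using R_cont by (intro isCont_mult)
next
  case False
  then have p0: "\<Psi> p = 0" using nonneg by (simp add: order_less_le)
  obtain C where C: "eventually (\<lambda>x. \<Psi> x > 0 \<longrightarrow> \<bar>deriv (deriv h) (\<Psi> x) * \<Psi> x\<bar> \<le> C) (at p)"
    using eventually_bounded_comp_at_zero[OF h_bound cont p0] by blast
  have R0: "R p = 0" using R_bound[rule_format, of p] p0 by simp
  have S_near: "eventually (\<lambda>x. S x < S p + 1) (at p)"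
    using S_cont unfolding isCont_def by (intro order_tendstoD(2)) auto
  have "((\<lambda>x. deriv (deriv h) (\<Psi> x) * R x) \<longlongrightarrow> 0) (at p)"
  proof (rule Lim_null_comparison[where g="\<lambda>x. \<bar>C\<bar> * sqrt (\<Psi> x) * \<bar>S p + 1\<bar>"])
    show "\<forall>\<^sub>F x in at p. norm (deriv (deriv h) (\<Psi> x) * R x) \<le> \<bar>C\<bar> * sqrt (\<Psi> x) * \<bar>S p + 1\<bar>"
      using C S_near
    proof eventually_elim
      case (elim x)
      show ?case
      proof (cases "\<Psi> x = 0")
        case True then have "R x = 0" using R_bound[rule_format, of x] by simp
        then show ?thesis using nonneg by simp
      next
        case False
        then have pos: "\<Psi> x > 0" using nonneg by (simp add: order_less_le)
        have "\<bar>deriv (deriv h) (\<Psi> x) * \<Psi> x\<bar> \<le> C" "S x \<le> S p + 1" using elim pos by auto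
        then show ?thesis using abs_mult_le_sqrt_mult[OF pos _ R_bound[rule_format, of x]] by simp
      qed
    qed
    have "((\<lambda>x. \<bar>C\<bar> * sqrt (\<Psi> x) * \<bar>S p + 1\<bar>) \<longlongrightarrow> \<bar>C\<bar> * sqrt (\<Psi> p) * \<bar>S p + 1\<bar>) (at p)"
      using cont unfolding isCont_def by (intro tendsto_intros)
    then show "((\<lambda>x. \<bar>C\<bar> * sqrt (\<Psi> x) * \<bar>S p + 1\<bar>) \<longlongrightarrow> 0) (at p)" using p0 by simp
  qed
  then show ?thesis using R0 by (simp add: isCont_def)
qed

section \<open>The edge potentials and their derivatives\<close>

lemma has_derivative_vec_nth [derivative_intros]:
  "(f has_derivative f') F \<Longrightarrow> ((\<lambda>x. f x $ j) has_derivative (\<lambda>x. f' x $ j)) F"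
  by (rule bounded_linear.has_derivative[OF bounded_linear_vec_nth])

definition edge_pairing :: "'N::finite \<Rightarrow> 'N \<Rightarrow> (real^'n::finite)^'N \<Rightarrow> (real^'n)^'N \<Rightarrow> real" where
  "edge_pairing i j v w = 2 * ((v$j - v$i) \<bullet> (w$j - w$i))"

lemma has_derivative_edge_pairing: "((\<lambda>p. edge_pairing i j p w) has_derivative (\<lambda>z. edge_pairing i j z w)) F"
  unfolding edge_pairing_def by (auto intro!: derivative_eq_intros)

lemma isCont_edge_pairing: "isCont (\<lambda>p. edge_pairing i j p w) p0"
  using has_derivative_edge_pairing has_derivative_continuous by blast

lemma edge_pairing_swap: "edge_pairing i j v w = edge_pairing j i v w"
  by (simp add: edge_pairing_def inner_diff_left inner_diff_right algebra_simps)

lemma edge_pairing_commute: "edge_pairing i j v w = edge_pairing i j w v"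
  by (simp add: edge_pairing_def inner_commute)

lemma edge_pairing_scaleR [simp]: "edge_pairing i j v (c *\<^sub>R w) = c * edge_pairing i j v w"
  by (simp add: edge_pairing_def algebra_simps flip: scaleR_diff_right)

locale edge_potential =
  fixes E :: "'N::finite set set" and d :: "'N set \<Rightarrow> real"
begin

definition edge_error :: "'N \<Rightarrow> 'N \<Rightarrow> (real^'n::finite)^'N \<Rightarrow> real" where
  "edge_error i j p = (norm (p$j - p$i))\<^sup>2 - (d {i,j})\<^sup>2"

definition nbrs :: "'N \<Rightarrow> 'N set" where
  "nbrs i = {j. {i,j} \<in> E}"

definition pot :: "'N \<Rightarrow> (real^'n::finite)^'N \<Rightarrow> real" where
  "pot i p = (1/4) * (\<Sum>j\<in>nbrs i. (edge_error i j p)\<^sup>2)"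

definition Dpot :: "'N \<Rightarrow> (real^'n::finite)^'N \<Rightarrow> (real^'n)^'N \<Rightarrow> real" where
  "Dpot i p w = (1/2) * (\<Sum>j\<in>nbrs i. edge_error i j p * edge_pairing i j p w)"

definition D2pot :: "'N \<Rightarrow> (real^'n::finite)^'N \<Rightarrow> (real^'n)^'N \<Rightarrow> (real^'n)^'N \<Rightarrow> real" where
  "D2pot i p v w = (1/2) * (\<Sum>j\<in>nbrs i.
     edge_pairing i j p v * edge_pairing i j p w + edge_error i j p * edge_pairing i j v w)"

definition D3pot ::
  "'N \<Rightarrow> (real^'n::finite)^'N \<Rightarrow> (real^'n)^'N \<Rightarrow> (real^'n)^'N \<Rightarrow> (real^'n)^'N \<Rightarrow> real" where
  "D3pot i p z v w = (1/2) * (\<Sum>j\<in>nbrs i. edge_pairing i j z v * edge_pairing i j p w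
     + edge_pairing i j p v * edge_pairing i j z w + edge_pairing i j p z * edge_pairing i j v w)"

definition pairing_abs_sum :: "'N \<Rightarrow> (real^'n::finite)^'N \<Rightarrow> (real^'n)^'N \<Rightarrow> real" where
  "pairing_abs_sum i p w = (\<Sum>j\<in>nbrs i. \<bar>edge_pairing i j p w\<bar>)"

lemma psi_i_eq_pot: "psi_i E d p i = pot i p"
  by (simp add: psi_i_def pot_def nbrs_def edge_error_def)

lemma edge_error_swap: "edge_error i j p = edge_error j i p"
  by (simp add: edge_error_def norm_minus_commute insert_commute)

lemma has_derivative_edge_error:
  "((\<lambda>p. edge_error i j p) has_derivative (\<lambda>w. edge_pairing i j p w)) (at p)"
proof -
  have expand: "(\<lambda>p. edge_error i j p) = (\<lambda>p. (p$j - p$i) \<bullet> (p$j - p$i) - (d {i,j})\<^sup>2)"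
    by (simp add: edge_error_def power2_norm_eq_inner fun_eq_iff)
  show ?thesis
    unfolding expand by (auto intro!: derivative_eq_intros simp: edge_pairing_def inner_commute fun_eq_iff)
qed

lemma has_derivative_pot: "((\<lambda>p. pot i p) has_derivative (\<lambda>w. Dpot i p w)) (at p)"
  unfolding pot_def Dpot_def
  by (auto intro!: derivative_eq_intros has_derivative_edge_error
      simp: sum_distrib_left fun_eq_iff algebra_simps)

lemma has_derivative_Dpot: "((\<lambda>p. Dpot i p w) has_derivative (\<lambda>v. D2pot i p v w)) (at p)"
  unfolding Dpot_def D2pot_def
  by (auto intro!: derivative_eq_intros has_derivative_edge_error has_derivative_edge_pairing
      simp: sum_distrib_left fun_eq_iff algebra_simps edge_pairing_commute add_divide_distrib)

lemma has_derivative_D2pot: "((\<lambda>p. D2pot i p v w) has_derivative (\<lambda>z. D3pot i p z v w)) (at p)"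
  unfolding D2pot_def D3pot_def
  by (auto intro!: derivative_eq_intros has_derivative_edge_error has_derivative_edge_pairing
      simp: sum_distrib_left fun_eq_iff algebra_simps edge_pairing_commute add_divide_distrib)

lemma Dpot_scaleR [simp]: "Dpot i p (c *\<^sub>R w) = c * Dpot i p w"
  by (simp add: Dpot_def sum_distrib_left algebra_simps)

lemma isCont_pot: "isCont (\<lambda>p. pot i p) p"
  using has_derivative_pot has_derivative_continuous by blast

lemma isCont_Dpot: "isCont (\<lambda>p. Dpot i p w) p"
  using has_derivative_Dpot has_derivative_continuous by blast

lemma isCont_D2pot: "isCont (\<lambda>p. D2pot i p v w) p"
  using has_derivative_D2pot has_derivative_continuous by blast

lemma isCont_D3pot: "isCont (\<lambda>p. D3pot i p z v w) p0"
  unfolding D3pot_def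
  by (intro isCont_mult isCont_sum ballI isCont_add continuous_const isCont_edge_pairing)

lemma isCont_pairing_abs_sum: "isCont (\<lambda>p. pairing_abs_sum i p w) p0"
  unfolding pairing_abs_sum_def by (intro isCont_sum ballI isCont_rabs isCont_edge_pairing)

lemma pot_nonneg: "pot i p \<ge> 0"
  unfolding pot_def by (simp add: sum_nonneg)

lemma pairing_abs_sum_nonneg: "pairing_abs_sum i p w \<ge> 0"
  by (simp add: pairing_abs_sum_def sum_nonneg)

lemma edge_error_eq_0_if_pot_eq_0:
  assumes "pot i p = 0" "j \<in> nbrs i"
  shows "edge_error i j p = 0"
proof -
  have "(\<Sum>j\<in>nbrs i. (edge_error i j p)\<^sup>2) = 0" using assms by (simp add: pot_def)
  then have "\<forall>j\<in>nbrs i. (edge_error i j p)\<^sup>2 = 0" by (subst (asm) sum_nonneg_eq_0_iff) auto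
  then show ?thesis using assms by simp
qed

lemma Dpot_eq_0_if_pot_eq_0: "pot i p = 0 \<Longrightarrow> Dpot i p w = 0"
  by (simp add: Dpot_def edge_error_eq_0_if_pot_eq_0)

lemma abs_edge_error_le:
  assumes "j \<in> nbrs i"
  shows "\<bar>edge_error i j p\<bar> \<le> 2 * sqrt (pot i p)"
proof -
  have "(edge_error i j p)\<^sup>2 \<le> (\<Sum>j\<in>nbrs i. (edge_error i j p)\<^sup>2)"
    using assms by (intro member_le_sum) auto
  also have "\<dots> = (2 * sqrt (pot i p))\<^sup>2"
    using pot_nonneg[of i p] by (simp add: power_mult_distrib pot_def)
  finally have "\<bar>edge_error i j p\<bar>\<^sup>2 \<le> (2 * sqrt (pot i p))\<^sup>2" by simp
  then show ?thesis by (rule power2_le_imp_le) (simp add: pot_nonneg)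
qed

lemma abs_Dpot_le: "\<bar>Dpot i p w\<bar> \<le> sqrt (pot i p) * pairing_abs_sum i p w"
proof -
  have "\<bar>\<Sum>j\<in>nbrs i. edge_error i j p * edge_pairing i j p w\<bar>
      \<le> (\<Sum>j\<in>nbrs i. \<bar>edge_error i j p * edge_pairing i j p w\<bar>)"
    by (rule sum_abs)
  also have "\<dots> \<le> (\<Sum>j\<in>nbrs i. 2 * sqrt (pot i p) * \<bar>edge_pairing i j p w\<bar>)"
    unfolding abs_mult by (intro sum_mono mult_right_mono abs_edge_error_le) auto
  also have "\<dots> = 2 * (sqrt (pot i p) * pairing_abs_sum i p w)"
    by (simp add: pairing_abs_sum_def sum_distrib_left mult.assoc)
  finally show ?thesis by (simp add: Dpot_def abs_mult)
qed

text \<open>Each edge error is Lipschitz near a zero of \<open>pot i\<close> and vanishes there, so \<open>pot i\<close>, a sum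
  of their squares, vanishes to second order.\<close>

lemma pot_quadratic_at_zero:
  assumes zero: "pot i p = 0"
  shows "\<exists>K. eventually (\<lambda>x. pot i x \<le> K * (norm (x - p))\<^sup>2) (at p)"
proof -
  have "\<forall>j. \<exists>L. eventually (\<lambda>x. \<bar>edge_error i j x - edge_error i j p\<bar> \<le> L * norm (x - p)) (at p)"
    using has_derivative_imp_eventually_lipschitz[OF has_derivative_edge_error] by blast
  from choice[OF this] obtain L where
    L: "\<And>j. eventually (\<lambda>x. \<bar>edge_error i j x - edge_error i j p\<bar> \<le> L j * norm (x - p)) (at p)"
    by blast
  have "eventually (\<lambda>x. \<forall>j\<in>nbrs i. \<bar>edge_error i j x\<bar> \<le> L j * norm (x - p)) (at p)"
  proof (rule eventually_ball_finite, simp, rule ballI)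
    fix j assume "j \<in> nbrs i"
    then have "edge_error i j p = 0" using edge_error_eq_0_if_pot_eq_0 zero by blast
    then show "eventually (\<lambda>x. \<bar>edge_error i j x\<bar> \<le> L j * norm (x - p)) (at p)" using L[of j] by simp
  qed
  then have "eventually (\<lambda>x. pot i x \<le> ((1/4) * (\<Sum>j\<in>nbrs i. (L j)\<^sup>2)) * (norm (x - p))\<^sup>2) (at p)"
  proof eventually_elim
    case (elim x)
    have "(edge_error i j x)\<^sup>2 \<le> (L j)\<^sup>2 * (norm (x - p))\<^sup>2" if j: "j \<in> nbrs i" for j
    proof -
      have "\<bar>edge_error i j x\<bar>\<^sup>2 \<le> (L j * norm (x - p))\<^sup>2"
        using elim j by (intro power_mono) auto
      then show ?thesis by (simp add: power_mult_distrib)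
    qed
    then have "(\<Sum>j\<in>nbrs i. (edge_error i j x)\<^sup>2) \<le> (\<Sum>j\<in>nbrs i. (L j)\<^sup>2) * (norm (x - p))\<^sup>2"
      by (simp add: sum_distrib_right sum_mono)
    then show ?case unfolding pot_def by linarith
  qed
  then show ?thesis by blast
qed

end

definition edge_ends :: "'N set \<Rightarrow> 'N \<times> 'N" where
  "edge_ends e = (SOME x. e = {fst x, snd x} \<and> fst x \<noteq> snd x)"

lemma edge_ends:
  assumes "card e = 2"
  shows "e = {fst (edge_ends e), snd (edge_ends e)} \<and> fst (edge_ends e) \<noteq> snd (edge_ends e)"
proof -
  obtain a c where "a \<noteq> c" "e = {a,c}" using assms by (auto simp: card_2_iff)
  then have "\<exists>x. e = {fst x, snd x} \<and> fst x \<noteq> snd x" by (intro exI[of _ "(a,c)"]) simp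
  from someI_ex[OF this] show ?thesis by (simp add: edge_ends_def)
qed

lemma edge_dist2_doubleton: "edge_dist2 p {i,j} = (norm (p$j - p$i))\<^sup>2"
  unfolding edge_dist2_def
  by (rule some_equality) (auto simp: doubleton_eq_iff norm_minus_commute)

locale edge_graph = edge_potential E d for E :: "'N::finite set set" and d +
  assumes E_edges: "\<forall>e\<in>E. card e = 2"
begin

definition edge_err :: "'N set \<Rightarrow> (real^'n::finite)^'N \<Rightarrow> real" where
  "edge_err e = edge_error (fst (edge_ends e)) (snd (edge_ends e))"

definition Dpsi :: "(real^'n::finite)^'N \<Rightarrow> (real^'n)^'N \<Rightarrow> real" where
  "Dpsi p w = (1/2) * (\<Sum>e\<in>E. edge_err e p * edge_pairing (fst (edge_ends e)) (snd (edge_ends e)) p w)"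

lemma psi_eq: "psi E d = (\<lambda>p. (1/4) * (\<Sum>e\<in>E. (edge_err e p)\<^sup>2))"
proof -
  have err: "edge_dist2 p e - (d e)\<^sup>2 = edge_err e p" if "e \<in> E" for e p
  proof -
    have "e = {fst (edge_ends e), snd (edge_ends e)}" using edge_ends E_edges that by blast
    then show ?thesis by (metis edge_dist2_doubleton edge_error_def edge_err_def)
  qed
  show ?thesis unfolding psi_def
    by (intro ext arg_cong[where f="\<lambda>x. (1/4) * x"] sum.cong refl) (simp add: err)
qed

lemma has_derivative_psi: "(psi E d has_derivative Dpsi p) (at p)"
proof -
  have "((\<lambda>p. (1/4) * (\<Sum>e\<in>E. (edge_err e p)\<^sup>2)) has_derivative (\<lambda>w. Dpsi p w)) (at p)"
    unfolding Dpsi_def edge_err_def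
    by (auto intro!: derivative_eq_intros has_derivative_edge_error
        simp: sum_distrib_left fun_eq_iff algebra_simps)
  then show ?thesis by (simp add: psi_eq)
qed

lemma sum_edges_containing: "(\<Sum>e\<in>{e\<in>E. i \<in> e}. f e) = (\<Sum>j\<in>nbrs i. f {i,j})"
proof (rule sum.reindex_bij_betw[symmetric], rule bij_betw_imageI)
  show "inj_on (\<lambda>j. {i, j}) (nbrs i)" by (auto simp: inj_on_def doubleton_eq_iff)
  have "e \<in> (\<lambda>j. {i, j}) ` nbrs i" if e: "e \<in> E" "i \<in> e" for e
  proof -
    obtain x y where "e = {x, y}" using E_edges e(1) by (auto simp: card_2_iff)
    then obtain j where "e = {i, j}" using e(2) by (auto simp: insert_commute)
    then show ?thesis using e(1) by (auto simp: nbrs_def)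
  qed
  then show "(\<lambda>j. {i, j}) ` nbrs i = {e \<in> E. i \<in> e}" by (auto simp: nbrs_def)
qed

text \<open>Only the edges at \<open>i\<close> see a displacement of the \<open>i\<close>-th block.\<close>

lemma Dpsi_eq_Dpot:
  assumes supp: "\<And>j. j \<noteq> i \<Longrightarrow> w$j = 0"
  shows "Dpsi p w = Dpot i p w"
proof -
  let ?a = "\<lambda>e. fst (edge_ends e)" and ?c = "\<lambda>e. snd (edge_ends e)"
  let ?T = "\<lambda>e. edge_err e p * edge_pairing (?a e) (?c e) p w"
  have ends: "e = {?a e, ?c e}" if "e \<in> E" for e
    using edge_ends E_edges that by blast
  have "(\<Sum>e\<in>E. ?T e) = (\<Sum>e\<in>E. if i \<in> e then ?T e else 0)"
  proof (rule sum.cong)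
    fix e assume e: "e \<in> E"
    show "?T e = (if i \<in> e then ?T e else 0)"
    proof (cases "i \<in> e")
      case False
      then have "?a e \<noteq> i" "?c e \<noteq> i" using ends[OF e] by auto
      then show ?thesis using False by (simp add: edge_pairing_def supp)
    qed simp
  qed simp
  also have "\<dots> = (\<Sum>j\<in>nbrs i. ?T {i,j})"
    by (simp add: sum.inter_filter[symmetric] sum_edges_containing)
  also have "\<dots> = (\<Sum>j\<in>nbrs i. edge_error i j p * edge_pairing i j p w)"
  proof (rule sum.cong)
    fix j assume "j \<in> nbrs i"
    then have "{i,j} = {?a {i,j}, ?c {i,j}}" using ends by (simp add: nbrs_def)
    then have "(?a {i,j} = i \<and> ?c {i,j} = j) \<or> (?a {i,j} = j \<and> ?c {i,j} = i)"
      by (auto simp: doubleton_eq_iff)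
    then show "?T {i,j} = edge_error i j p * edge_pairing i j p w"
      by (elim disjE) (simp_all add: edge_err_def edge_error_swap[of j i] edge_pairing_swap[of j i])
  qed simp
  finally show ?thesis by (simp add: Dpsi_def Dpot_def)
qed

end

section \<open>The control vector fields and their iterated Lie derivatives\<close>

definition vert :: "'N \<times> 'n \<times> nat \<Rightarrow> 'N" where "vert m = fst m"
definition coord :: "'N \<times> 'n \<times> nat \<Rightarrow> 'n" where "coord m = fst (snd m)"
definition kind :: "'N \<times> 'n \<times> nat \<Rightarrow> nat" where "kind m = snd (snd m)"

lemma index_simps [simp]: "vert (i,k,\<nu>) = i" "coord (i,k,\<nu>) = k" "kind (i,k,\<nu>) = \<nu>"
  by (simp_all add: vert_def coord_def kind_def)

lemma LambdaE: "m \<in> Lambda \<Longrightarrow> (\<And>i k \<nu>. m = (i,k,\<nu>) \<Longrightarrow> \<nu> \<in> {1,2} \<Longrightarrow> P) \<Longrightarrow> P"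
  by (cases m) (auto simp: Lambda_def)

lemma kind_Lambda: "m \<in> Lambda \<Longrightarrow> kind m \<in> {1,2}"
  by (erule LambdaE) simp

lemma sum_Lambda: "(\<Sum>m\<in>Lambda. f m) = (\<Sum>i\<in>UNIV. \<Sum>k\<in>UNIV. f (i,k,1) + f (i,k,2))"
  unfolding Lambda_def sum.cartesian_product' by simp

locale control_fields = edge_graph E d for E :: "'N::finite set set" and d +
  fixes b :: "'N \<Rightarrow> 'n::finite \<Rightarrow> real^'n" and h :: "nat \<Rightarrow> real \<Rightarrow> real"
  assumes h_zero: "\<forall>\<nu>\<in>{1,2}. \<forall>y\<le>0. h \<nu> y = 0"
    and h_C2: "\<forall>\<nu>\<in>{1,2}. C2_pos (h \<nu>)"
    and h_div: "\<forall>\<nu>\<in>{1,2}. \<exists>C. eventually (\<lambda>y. \<bar>h \<nu> y / y\<bar> \<le> C) (at_right 0)"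
    and h_d1: "\<forall>\<nu>\<in>{1,2}. \<exists>C. eventually (\<lambda>y. \<bar>deriv (h \<nu>) y\<bar> \<le> C) (at_right 0)"
    and h_d2: "\<forall>\<nu>\<in>{1,2}. \<exists>C. eventually (\<lambda>y. \<bar>deriv (deriv (h \<nu>)) y * y\<bar> \<le> C) (at_right 0)"
begin

lemma h_props:
  assumes "m \<in> Lambda"
  defines "g \<equiv> h (kind m)"
  shows "\<forall>y\<le>0. g y = 0" "\<forall>y>0. g differentiable (at y)"
    "\<forall>y>0. deriv g differentiable (at y)"
    "continuous_on {0<..} (deriv (deriv g))"
    "\<exists>C. eventually (\<lambda>y. \<bar>g y / y\<bar> \<le> C) (at_right 0)"
    "\<exists>C. eventually (\<lambda>y. \<bar>deriv g y\<bar> \<le> C) (at_right 0)"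
    "\<exists>C. eventually (\<lambda>y. \<bar>deriv (deriv g) y * y\<bar> \<le> C) (at_right 0)"
  using kind_Lambda[OF assms(1)] h_zero h_C2 h_div h_d1 h_d2 unfolding g_def C2_pos_def by auto

definition Bdir :: "'N \<times> 'n \<times> nat \<Rightarrow> (real^'n)^'N" where
  "Bdir m = Bvec b (vert m) (coord m)"

definition gain :: "'N \<times> 'n \<times> nat \<Rightarrow> (real^'n)^'N \<Rightarrow> real" where
  "gain m p = h (kind m) (pot (vert m) p)"

text \<open>Where \<open>pot (vert m)\<close> vanishes, \<open>h\<close> need not be differentiable and \<open>deriv h 0\<close> is junk,
  but there the factor \<open>Dpot\<close> vanishes too.\<close>

definition Dgain :: "'N \<times> 'n \<times> nat \<Rightarrow> (real^'n)^'N \<Rightarrow> (real^'n)^'N \<Rightarrow> real" where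
  "Dgain m p v = deriv (h (kind m)) (pot (vert m) p) * Dpot (vert m) p v"

definition slope :: "'N \<times> 'n \<times> nat \<Rightarrow> (real^'n)^'N \<Rightarrow> real" where
  "slope m p = Dpot (vert m) p (Bdir m)"

lemma Xf_eq: "Xf h b E d m p = gain m p *\<^sub>R Bdir m"
  by (cases m) (simp add: Xf_def gain_def Bdir_def psi_i_eq_pot)

lemma Dpsi_Bdir: "Dpsi p (Bdir m) = slope m p"
  unfolding Bdir_def slope_def by (rule Dpsi_eq_Dpot) (simp add: Bvec_def)

lemma has_derivative_gain:
  assumes "m \<in> Lambda"
  shows "((\<lambda>p. gain m p) has_derivative (\<lambda>v. Dgain m p v)) (at p)"
  unfolding gain_def Dgain_def
  by (rule has_derivative_comp_nonneg[OF h_props(1,2,5)[OF assms] _ has_derivative_pot])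
     (auto simp: pot_nonneg Dpot_eq_0_if_pot_eq_0 pot_quadratic_at_zero)

lemma isCont_gain: "m \<in> Lambda \<Longrightarrow> isCont (\<lambda>p. gain m p) p"
  using has_derivative_gain has_derivative_continuous by blast

lemma has_derivative_Xf:
  assumes "m \<in> Lambda"
  shows "(Xf h b E d m has_derivative (\<lambda>v. Dgain m p v *\<^sub>R Bdir m)) (at p)"
proof -
  have "Xf h b E d m = (\<lambda>p. gain m p *\<^sub>R Bdir m)" by (simp add: fun_eq_iff Xf_eq)
  then show ?thesis
    using has_derivative_scaleR[OF has_derivative_gain[OF assms] has_derivative_const] by simp
qed

lemma has_derivative_slope: "((\<lambda>p. slope m p) has_derivative (\<lambda>w. D2pot (vert m) p w (Bdir m))) (at p)"
  unfolding slope_def by (rule has_derivative_Dpot)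

lemma isCont_slope: "isCont (\<lambda>p. slope m p) p"
  unfolding slope_def by (rule isCont_Dpot)

definition lie1 :: "'N \<times> 'n \<times> nat \<Rightarrow> (real^'n)^'N \<Rightarrow> real" where
  "lie1 m p = gain m p * slope m p"

definition Dlie1 :: "'N \<times> 'n \<times> nat \<Rightarrow> (real^'n)^'N \<Rightarrow> (real^'n)^'N \<Rightarrow> real" where
  "Dlie1 m p w = Dgain m p w * slope m p + gain m p * D2pot (vert m) p w (Bdir m)"

definition slope_pair :: "'N \<times> 'n \<times> nat \<Rightarrow> 'N \<times> 'n \<times> nat \<Rightarrow> (real^'n)^'N \<Rightarrow> real" where
  "slope_pair m' m p = Dpot (vert m) p (Bdir m') * slope m p"

definition Dslope_pair ::
  "'N \<times> 'n \<times> nat \<Rightarrow> 'N \<times> 'n \<times> nat \<Rightarrow> (real^'n)^'N \<Rightarrow> (real^'n)^'N \<Rightarrow> real" where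
  "Dslope_pair m' m p w =
     D2pot (vert m) p w (Bdir m') * slope m p + Dpot (vert m) p (Bdir m') * D2pot (vert m) p w (Bdir m)"

definition lie2_factor :: "'N \<times> 'n \<times> nat \<Rightarrow> 'N \<times> 'n \<times> nat \<Rightarrow> (real^'n)^'N \<Rightarrow> real" where
  "lie2_factor m' m p = deriv (h (kind m)) (pot (vert m) p) * slope_pair m' m p
     + gain m p * D2pot (vert m) p (Bdir m') (Bdir m)"

definition Dlie2_factor ::
  "'N \<times> 'n \<times> nat \<Rightarrow> 'N \<times> 'n \<times> nat \<Rightarrow> (real^'n)^'N \<Rightarrow> (real^'n)^'N \<Rightarrow> real" where
  "Dlie2_factor m' m p w =
     deriv (deriv (h (kind m))) (pot (vert m) p) * (Dpot (vert m) p w * slope_pair m' m p)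
     + deriv (h (kind m)) (pot (vert m) p) * Dslope_pair m' m p w
     + deriv (h (kind m)) (pot (vert m) p) * (Dpot (vert m) p w * D2pot (vert m) p (Bdir m') (Bdir m))
     + gain m p * D3pot (vert m) p w (Bdir m') (Bdir m)"

definition lie2 :: "'N \<times> 'n \<times> nat \<Rightarrow> 'N \<times> 'n \<times> nat \<Rightarrow> (real^'n)^'N \<Rightarrow> real" where
  "lie2 m' m p = gain m' p * lie2_factor m' m p"

definition Dlie2 ::
  "'N \<times> 'n \<times> nat \<Rightarrow> 'N \<times> 'n \<times> nat \<Rightarrow> (real^'n)^'N \<Rightarrow> (real^'n)^'N \<Rightarrow> real" where
  "Dlie2 m' m p w = Dgain m' p w * lie2_factor m' m p + gain m' p * Dlie2_factor m' m p w"

definition lie3 ::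
  "'N \<times> 'n \<times> nat \<Rightarrow> 'N \<times> 'n \<times> nat \<Rightarrow> 'N \<times> 'n \<times> nat \<Rightarrow> (real^'n)^'N \<Rightarrow> real" where
  "lie3 m'' m' m p = gain m'' p * Dlie2 m' m p (Bdir m'')"

lemma has_derivative_lie1:
  assumes "m \<in> Lambda"
  shows "(lie1 m has_derivative Dlie1 m p) (at p)"
proof -
  have "((\<lambda>p. gain m p * slope m p) has_derivative
      (\<lambda>w. gain m p * D2pot (vert m) p w (Bdir m) + Dgain m p w * slope m p)) (at p)"
    by (rule has_derivative_mult[OF has_derivative_gain[OF assms] has_derivative_slope])
  then show ?thesis by (simp add: lie1_def[abs_def] Dlie1_def[abs_def] add.commute)
qed

lemma lie_Xf_psi: "lie (Xf h b E d m) (psi E d) = lie1 m"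
proof
  fix p
  have "lie (Xf h b E d m) (psi E d) p = Dpsi p (gain m p *\<^sub>R Bdir m)"
    by (simp add: lie_def Xf_eq frechet_derivative_at[OF has_derivative_psi, symmetric])
  also have "\<dots> = lie1 m p"
    by (simp add: linear_scale[OF has_derivative_linear[OF has_derivative_psi]] lie1_def Dpsi_Bdir)
  finally show "lie (Xf h b E d m) (psi E d) p = lie1 m p" .
qed

lemma lie_Xf_lie1:
  assumes "m \<in> Lambda"
  shows "lie (Xf h b E d m') (lie1 m) = lie2 m' m"
proof
  fix p
  have "Dlie1 m p (Bdir m') = lie2_factor m' m p"
    by (simp add: Dlie1_def lie2_factor_def Dgain_def slope_pair_def algebra_simps)
  then show "lie (Xf h b E d m') (lie1 m) p = lie2 m' m p"
    using has_derivative_linear[OF has_derivative_lie1[OF assms, of p]]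
    by (simp add: lie_def Xf_eq lie2_def linear_scale
        frechet_derivative_at[OF has_derivative_lie1[OF assms], symmetric])
qed

lemma has_derivative_slope_pair:
  "((\<lambda>p. slope_pair m' m p) has_derivative (\<lambda>w. Dslope_pair m' m p w)) (at p)"
proof -
  have "((\<lambda>p. Dpot (vert m) p (Bdir m') * slope m p) has_derivative
     (\<lambda>w. Dpot (vert m) p (Bdir m') * D2pot (vert m) p w (Bdir m)
          + D2pot (vert m) p w (Bdir m') * slope m p)) (at p)"
    by (rule has_derivative_mult[OF has_derivative_Dpot has_derivative_slope])
  then show ?thesis by (simp add: slope_pair_def Dslope_pair_def add.commute)
qed

lemma isCont_slope_pair: "isCont (\<lambda>p. slope_pair m' m p) p"
  using has_derivative_slope_pair has_derivative_continuous by blast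

lemma isCont_Dslope_pair: "isCont (\<lambda>p. Dslope_pair m' m p w) p"
  unfolding Dslope_pair_def by (intro isCont_add isCont_mult isCont_D2pot isCont_slope isCont_Dpot)

lemma slope_pair_eq_0: "pot (vert m) p = 0 \<Longrightarrow> slope_pair m' m p = 0"
  by (simp add: slope_pair_def Dpot_eq_0_if_pot_eq_0)

lemma Dslope_pair_eq_0: "pot (vert m) p = 0 \<Longrightarrow> Dslope_pair m' m p w = 0"
  by (simp add: Dslope_pair_def slope_def Dpot_eq_0_if_pot_eq_0)

lemma abs_slope_pair_le:
  "\<bar>slope_pair m' m x\<bar>
     \<le> pot (vert m) x * (pairing_abs_sum (vert m) x (Bdir m') * pairing_abs_sum (vert m) x (Bdir m))"
proof -
  let ?i = "vert m"
  have "\<bar>slope_pair m' m x\<bar> = \<bar>Dpot ?i x (Bdir m')\<bar> * \<bar>Dpot ?i x (Bdir m)\<bar>"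
    by (simp add: slope_pair_def slope_def abs_mult)
  also have "\<dots> \<le> (sqrt (pot ?i x) * pairing_abs_sum ?i x (Bdir m'))
      * (sqrt (pot ?i x) * pairing_abs_sum ?i x (Bdir m))"
    by (intro mult_mono abs_Dpot_le) (simp_all add: pairing_abs_sum_nonneg pot_nonneg)
  also have "\<dots> = pot ?i x * (pairing_abs_sum ?i x (Bdir m') * pairing_abs_sum ?i x (Bdir m))"
    using pot_nonneg[of ?i x] by (simp add: algebra_simps)
  finally show ?thesis .
qed

lemma has_derivative_lie2_factor:
  assumes m: "m \<in> Lambda"
  shows "((\<lambda>p. lie2_factor m' m p) has_derivative (\<lambda>w. Dlie2_factor m' m p w)) (at p)"
proof -
  let ?i = "vert m" and ?g = "h (kind m)"
  have S_cont: "isCont (\<lambda>x. pairing_abs_sum ?i x (Bdir m') * pairing_abs_sum ?i x (Bdir m)) p"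
    by (intro isCont_mult isCont_pairing_abs_sum)
  have first: "((\<lambda>x. deriv ?g (pot ?i x) * slope_pair m' m x) has_derivative
     (\<lambda>v. deriv (deriv ?g) (pot ?i p) * Dpot ?i p v * slope_pair m' m p
          + deriv ?g (pot ?i p) * Dslope_pair m' m p v)) (at p)"
  proof (rule has_derivative_deriv_comp_mult_nonneg[OF h_props(3,6)[OF m] _ has_derivative_pot
        _ _ has_derivative_slope_pair])
    show "pot ?i p = 0 \<Longrightarrow> \<exists>K. \<forall>\<^sub>F x in at p. \<bar>slope_pair m' m x\<bar> \<le> K * pot ?i x"
      using eventually_le_mult_of_isCont[OF S_cont] abs_slope_pair_le pot_nonneg by blast
  qed (simp_all add: pot_nonneg Dpot_eq_0_if_pot_eq_0 pot_quadratic_at_zero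
        slope_pair_eq_0 Dslope_pair_eq_0)
  have second: "((\<lambda>x. gain m x * D2pot ?i x (Bdir m') (Bdir m)) has_derivative
     (\<lambda>v. gain m p * D3pot ?i p v (Bdir m') (Bdir m) + Dgain m p v * D2pot ?i p (Bdir m') (Bdir m))) (at p)"
    by (rule has_derivative_mult[OF has_derivative_gain[OF m] has_derivative_D2pot])
  show ?thesis
    using has_derivative_add[OF first second]
    by (simp add: lie2_factor_def[abs_def] Dlie2_factor_def Dgain_def algebra_simps)
qed

lemma has_derivative_lie2:
  assumes "m \<in> Lambda" "m' \<in> Lambda"
  shows "(lie2 m' m has_derivative Dlie2 m' m p) (at p)"
proof -
  have "((\<lambda>p. gain m' p * lie2_factor m' m p) has_derivative
      (\<lambda>w. gain m' p * Dlie2_factor m' m p w + Dgain m' p w * lie2_factor m' m p)) (at p)"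
    by (rule has_derivative_mult[OF has_derivative_gain[OF assms(2)] has_derivative_lie2_factor[OF assms(1)]])
  then show ?thesis by (simp add: lie2_def[abs_def] Dlie2_def[abs_def] add.commute)
qed

lemma isCont_lie2_factor: "m \<in> Lambda \<Longrightarrow> isCont (\<lambda>p. lie2_factor m' m p) p"
  using has_derivative_lie2_factor has_derivative_continuous by blast

lemma isCont_lie2: "m \<in> Lambda \<Longrightarrow> m' \<in> Lambda \<Longrightarrow> isCont (lie2 m' m) p"
  using has_derivative_lie2 has_derivative_continuous by blast

lemma lie_Xf_lie2:
  assumes "m \<in> Lambda" "m' \<in> Lambda"
  shows "lie (Xf h b E d m'') (lie2 m' m) = lie3 m'' m' m"
proof
  fix p
  show "lie (Xf h b E d m'') (lie2 m' m) p = lie3 m'' m' m p"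
    using has_derivative_linear[OF has_derivative_lie2[OF assms, of p]]
    by (simp add: lie_def Xf_eq lie3_def linear_scale
        frechet_derivative_at[OF has_derivative_lie2[OF assms], symmetric])
qed

text \<open>Near the zeros of \<open>\<psi>\<^sub>i\<close> the factor \<open>h''(\<psi>\<^sub>i)\<close> may blow up like \<open>1/\<psi>\<^sub>i\<close>; it is
  multiplied by \<open>D\<psi>\<^sub>i \<cdot> slope_pair = O(\<psi>\<^sub>i\<^sup>3\<^sup>/\<^sup>2)\<close>, and every other factor \<open>h'(\<psi>\<^sub>i)\<close> by
  something vanishing where \<open>\<psi>\<^sub>i\<close> does.\<close>

lemma isCont_Dlie2_factor:
  assumes m: "m \<in> Lambda"
  shows "isCont (\<lambda>p. Dlie2_factor m' m p w) p"
proof -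
  let ?i = "vert m"
  let ?S = "\<lambda>x. pairing_abs_sum ?i x w
      * (pairing_abs_sum ?i x (Bdir m') * pairing_abs_sum ?i x (Bdir m))"
  have nonneg: "\<forall>x. 0 \<le> pot ?i x" by (simp add: pot_nonneg)
  have c1: "isCont (\<lambda>x. deriv (deriv (h (kind m))) (pot ?i x) * (Dpot ?i x w * slope_pair m' m x)) p"
  proof (rule isCont_deriv2_comp_mult_nonneg[where S="?S", OF h_props(4,7)[OF m] nonneg isCont_pot])
    show "isCont (\<lambda>x. Dpot ?i x w * slope_pair m' m x) p"
      by (intro isCont_mult isCont_Dpot isCont_slope_pair)
    show "isCont ?S p" by (intro isCont_mult isCont_pairing_abs_sum)
    show "\<forall>x. \<bar>Dpot ?i x w * slope_pair m' m x\<bar> \<le> pot ?i x * sqrt (pot ?i x) * ?S x"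
    proof
      fix x
      have "\<bar>Dpot ?i x w * slope_pair m' m x\<bar> \<le> (sqrt (pot ?i x) * pairing_abs_sum ?i x w)
          * (pot ?i x * (pairing_abs_sum ?i x (Bdir m') * pairing_abs_sum ?i x (Bdir m)))"
        unfolding abs_mult
        by (intro mult_mono abs_Dpot_le abs_slope_pair_le) (simp_all add: pairing_abs_sum_nonneg pot_nonneg)
      then show "\<bar>Dpot ?i x w * slope_pair m' m x\<bar> \<le> pot ?i x * sqrt (pot ?i x) * ?S x"
        by (simp add: algebra_simps)
    qed
  qed
  have c2: "isCont (\<lambda>x. deriv (h (kind m)) (pot ?i x) * Dslope_pair m' m x w) p"
    by (rule isCont_deriv_comp_mult_nonneg[OF h_props(3,6)[OF m] nonneg isCont_pot isCont_Dslope_pair])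
       (simp add: Dslope_pair_eq_0)
  have c3: "isCont (\<lambda>x. deriv (h (kind m)) (pot ?i x) * (Dpot ?i x w * D2pot ?i x (Bdir m') (Bdir m))) p"
    by (rule isCont_deriv_comp_mult_nonneg[OF h_props(3,6)[OF m] nonneg isCont_pot])
       (auto intro!: isCont_mult isCont_Dpot isCont_D2pot simp: Dpot_eq_0_if_pot_eq_0)
  have c4: "isCont (\<lambda>x. gain m x * D3pot ?i x w (Bdir m') (Bdir m)) p"
    by (intro isCont_mult isCont_gain[OF m] isCont_D3pot)
  show ?thesis unfolding Dlie2_factor_def by (intro isCont_add c1 c2 c3 c4)
qed

lemma isCont_lie3:
  assumes "m \<in> Lambda" "m' \<in> Lambda" "m'' \<in> Lambda"
  shows "isCont (lie3 m'' m' m) p"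
proof -
  have "lie3 m'' m' m = (\<lambda>p. gain m'' p
      * (deriv (h (kind m')) (pot (vert m') p) * (Dpot (vert m') p (Bdir m'') * lie2_factor m' m p)
         + gain m' p * Dlie2_factor m' m p (Bdir m'')))"
    by (simp add: fun_eq_iff lie3_def Dlie2_def Dgain_def mult.assoc)
  moreover have "isCont (\<lambda>p. deriv (h (kind m')) (pot (vert m') p)
      * (Dpot (vert m') p (Bdir m'') * lie2_factor m' m p)) p"
    by (intro isCont_deriv_comp_mult_nonneg[OF h_props(3,6)[OF assms(2)]])
       (auto intro!: isCont_mult isCont_Dpot isCont_lie2_factor[OF assms(1)]
         simp: Dpot_eq_0_if_pot_eq_0 pot_nonneg isCont_pot)
  ultimately show ?thesis
    using assms by (auto intro!: isCont_mult isCont_add isCont_gain isCont_Dlie2_factor)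
qed

text \<open>The fields \<open>X\<^sub>(\<^sub>i\<^sub>,\<^sub>k\<^sub>,\<^sub>1\<^sub>)\<close> and \<open>X\<^sub>(\<^sub>i\<^sub>,\<^sub>k\<^sub>,\<^sub>2\<^sub>)\<close> are parallel to the same constant vector, so
  their bracket is again a multiple of it, and \<open>Y\<psi>\<close> is a combination of second Lie derivatives.\<close>

lemma lie_Yf_psi:
  "lie (Yf h b E d) (psi E d) p =
     (1/2) * (\<Sum>i\<in>UNIV. \<Sum>k\<in>UNIV. lie2 (i,k,1) (i,k,2) p - lie2 (i,k,2) (i,k,1) p)"
proof -
  have lin: "linear (Dpsi p)" using has_derivative_psi has_derivative_linear by blast
  have bracket: "lie_bracket (Xf h b E d (i,k,1)) (Xf h b E d (i,k,2)) p =
      (gain (i,k,1) p * Dgain (i,k,2) p (Bdir (i,k,1))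
        - gain (i,k,2) p * Dgain (i,k,1) p (Bdir (i,k,1))) *\<^sub>R Bdir (i,k,1)" for i k
  proof -
    have "(i,k,\<nu>) \<in> Lambda" if "\<nu> \<in> {1,2}" for \<nu> using that by (simp add: Lambda_def)
    then have "frechet_derivative (Xf h b E d (i,k,\<nu>)) (at p) = (\<lambda>v. Dgain (i,k,\<nu>) p v *\<^sub>R Bdir (i,k,\<nu>))"
      if "\<nu> \<in> {1,2}" for \<nu>
      using that by (simp add: frechet_derivative_at[OF has_derivative_Xf, symmetric])
    then show ?thesis
      unfolding lie_bracket_def by (simp add: Xf_eq Bdir_def Dgain_def algebra_simps)
  qed
  have "lie (Yf h b E d) (psi E d) p = Dpsi p (Yf h b E d p)"
    by (simp add: lie_def frechet_derivative_at[OF has_derivative_psi, symmetric])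
  also have "\<dots> = (1/2) * (\<Sum>i\<in>UNIV. \<Sum>k\<in>UNIV.
      (gain (i,k,1) p * Dgain (i,k,2) p (Bdir (i,k,1)) - gain (i,k,2) p * Dgain (i,k,1) p (Bdir (i,k,1)))
        * slope (i,k,1) p)"
    unfolding Yf_def bracket by (simp add: linear_scale[OF lin] linear_sum[OF lin] Dpsi_Bdir)
  also have "\<dots> = (1/2) * (\<Sum>i\<in>UNIV. \<Sum>k\<in>UNIV. lie2 (i,k,1) (i,k,2) p - lie2 (i,k,2) (i,k,1) p)"
    by (simp add: lie2_def lie2_factor_def slope_pair_def slope_def Dgain_def Bdir_def algebra_simps)
  finally show ?thesis .
qed

end

section \<open>Fourier expansions of the inputs\<close>

lemma has_vector_derivative_exp_i_mult:
  "((\<lambda>s. exp (\<i> * complex_of_real (a * s))) has_vector_derivative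
     (\<i> * complex_of_real a * exp (\<i> * complex_of_real (a * s)))) (at s)"
proof -
  have "((\<lambda>z. exp (\<i> * of_real a * z)) has_field_derivative
      (\<i> * of_real a * exp (\<i> * of_real a * of_real s))) (at (of_real s))"
    by (auto intro!: derivative_eq_intros)
  from has_vector_derivative_real_field[OF this] show ?thesis by (simp add: mult.assoc)
qed

lemma u_eq_exp_sum:
  assumes pos: "\<omega> i k > 0" and \<nu>: "\<nu> \<in> {1,2}"
  shows "complex_of_real (u \<omega> \<phi> (i,k,\<nu>) s) =
    (\<Sum>w\<in>Omega \<omega> (i,k,\<nu>). eta \<omega> \<phi> w (i,k,\<nu>) * exp (\<i> * complex_of_real (w * s)))"
proof -
  define a where "a = \<omega> i k"
  define z where "z = \<i> * complex_of_real (a * s + \<phi> i k)"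
  have a: "a > 0" using pos by (simp add: a_def)
  have "(\<Sum>w\<in>Omega \<omega> (i,k,\<nu>). eta \<omega> \<phi> w (i,k,\<nu>) * exp (\<i> * complex_of_real (w * s)))
      = eta \<omega> \<phi> a (i,k,\<nu>) * exp (\<i> * complex_of_real (a * s))
        + eta \<omega> \<phi> (-a) (i,k,\<nu>) * exp (\<i> * complex_of_real (- a * s))"
    using a by (simp add: Omega_def a_def)
  also have "\<dots> = (if \<nu> = 1 then complex_of_real (sqrt a) * (exp z + exp (-z)) / 2
      else complex_of_real (sqrt a) * (exp z - exp (-z)) / (2 * \<i>))"
    using a by (simp add: eta_def a_def[symmetric] z_def exp_add[symmetric] algebra_simps
        add_divide_distrib diff_divide_distrib)
  also have "\<dots> = complex_of_real (u \<omega> \<phi> (i,k,\<nu>) s)"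
    using \<nu> by (auto simp: u_def a_def z_def cos_exp_eq sin_exp_eq simp flip: cos_of_real sin_of_real)
  finally show ?thesis ..
qed

lemma isCont_u: "isCont (\<lambda>s. complex_of_real (u \<omega> \<phi> m s)) s0"
proof (cases m)
  case (fields i k \<nu>)
  then show ?thesis by (cases "\<nu> = 1") (simp_all add: u_def continuous_intros)
qed

lemma eta_resonant_sum:
  assumes pos: "\<omega> i k > 0" and \<nu>: "\<nu> \<in> {1,2}" "\<nu>' \<in> {1,2}"
  defines "a \<equiv> \<omega> i k"
  shows "eta \<omega> \<phi> (-a) (i,k,\<nu>) / (\<i> * complex_of_real (-a)) * eta \<omega> \<phi> a (i,k,\<nu>')
     + eta \<omega> \<phi> a (i,k,\<nu>) / (\<i> * complex_of_real a) * eta \<omega> \<phi> (-a) (i,k,\<nu>')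
     = (if \<nu> = 1 \<and> \<nu>' = 2 then 1/2 else if \<nu> = 2 \<and> \<nu>' = 1 then -1/2 else 0)"
proof -
  have a: "a > 0" using pos by (simp add: a_def)
  define E where "E = exp (\<i> * complex_of_real (\<phi> i k))"
  define q where "q = complex_of_real (sqrt a)"
  have E: "E \<noteq> 0" by (simp add: E_def)
  have q: "q * q = complex_of_real a" using a by (simp add: q_def flip: of_real_mult)
  have a0: "complex_of_real a \<noteq> 0" using a by simp
  have eta: "eta \<omega> \<phi> a (i,k,n) = q * (if n = 1 then E / 2 else E / (2 * \<i>))"
    "eta \<omega> \<phi> (-a) (i,k,n) = q * (if n = 1 then inverse E / 2 else - inverse E / (2 * \<i>))" for n
    using a by (simp_all add: eta_def a_def[symmetric] q_def E_def exp_minus)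
  consider "\<nu> = 1" "\<nu>' = 1" | "\<nu> = 1" "\<nu>' = 2" | "\<nu> = 2" "\<nu>' = 1" | "\<nu> = 2" "\<nu>' = 2"
    using \<nu> by blast
  then show ?thesis
    by cases (use a0 E in \<open>simp_all add: eta field_simps q\<close>)
qed

lemma has_vector_derivative_UV1:
  assumes pos: "\<forall>i k. \<omega> i k > 0" and m: "m \<in> Lambda"
  shows "((\<lambda>s. UV1 \<omega> \<phi> m s) has_vector_derivative - complex_of_real (u \<omega> \<phi> m s)) (at s)"
proof (rule LambdaE[OF m])
  fix i k \<nu> assume m: "m = (i,k,\<nu>)" and \<nu>: "\<nu> \<in> {1,2}"
  let ?\<Omega> = "Omega \<omega> (i,k,\<nu>)"
  have "((\<lambda>s. - (\<Sum>w\<in>?\<Omega>. eta \<omega> \<phi> w (i,k,\<nu>) / (\<i> * complex_of_real w) * exp (\<i> * complex_of_real (w * s))))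
      has_vector_derivative - (\<Sum>w\<in>?\<Omega>. eta \<omega> \<phi> w (i,k,\<nu>) / (\<i> * complex_of_real w)
          * (\<i> * complex_of_real w * exp (\<i> * complex_of_real (w * s))))) (at s)"
    by (intro has_vector_derivative_minus has_vector_derivative_sum has_vector_derivative_mult_right
        has_vector_derivative_exp_i_mult)
  moreover have "(\<Sum>w\<in>?\<Omega>. eta \<omega> \<phi> w (i,k,\<nu>) / (\<i> * complex_of_real w)
        * (\<i> * complex_of_real w * exp (\<i> * complex_of_real (w * s))))
      = (\<Sum>w\<in>?\<Omega>. eta \<omega> \<phi> w (i,k,\<nu>) * exp (\<i> * complex_of_real (w * s)))"
    using pos[rule_format, of i k] by (intro sum.cong) (auto simp: Omega_def)
  ultimately show ?thesis
    using u_eq_exp_sum[of \<omega> i k \<nu> \<phi> s] pos \<nu> by (simp add: UV1_def m)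
qed

text \<open>The terms of the product \<open>UV\<^sub>m(s) u\<^sub>m\<^sub>'(s)\<close>, indexed by frequency pairs \<open>(\<omega>', \<omega>)\<close>;
  those with \<open>\<omega>' + \<omega> \<noteq> 0\<close> also make up the derivative of \<open>UV\<^sub>m\<^sub>'\<^sub>,\<^sub>m\<close>.\<close>

definition fourier_product ::
  "('N \<Rightarrow> 'n \<Rightarrow> real) \<Rightarrow> ('N \<Rightarrow> 'n \<Rightarrow> real) \<Rightarrow> 'N \<times> 'n \<times> nat \<Rightarrow> 'N \<times> 'n \<times> nat \<Rightarrow> real
     \<Rightarrow> real \<times> real \<Rightarrow> complex" where
  "fourier_product \<omega> \<phi> m' m s x = eta \<omega> \<phi> (snd x) m / (\<i> * complex_of_real (snd x))
     * eta \<omega> \<phi> (fst x) m' * exp (\<i> * complex_of_real ((fst x + snd x) * s))"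

definition DUV2 ::
  "('N \<Rightarrow> 'n \<Rightarrow> real) \<Rightarrow> ('N \<Rightarrow> 'n \<Rightarrow> real) \<Rightarrow> 'N \<times> 'n \<times> nat \<Rightarrow> 'N \<times> 'n \<times> nat \<Rightarrow> real \<Rightarrow> complex" where
  "DUV2 \<omega> \<phi> m' m s = (\<Sum>x\<in>{x\<in>Omega \<omega> m' \<times> Omega \<omega> m. fst x + snd x \<noteq> 0}. fourier_product \<omega> \<phi> m' m s x)"

lemma has_vector_derivative_UV2:
  assumes pos: "\<forall>i k. \<omega> i k > 0"
  shows "((\<lambda>s. UV2 \<omega> \<phi> m' m s) has_vector_derivative DUV2 \<omega> \<phi> m' m s) (at s)"
proof -
  let ?N = "{x\<in>Omega \<omega> m' \<times> Omega \<omega> m. fst x + snd x \<noteq> 0}"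
  let ?c = "\<lambda>x. eta \<omega> \<phi> (fst x) m' * eta \<omega> \<phi> (snd x) m
      / (\<i>\<^sup>2 * complex_of_real (snd x) * complex_of_real (fst x + snd x))"
  have "{(w',w). w' \<in> Omega \<omega> m' \<and> w \<in> Omega \<omega> m \<and> w' + w \<noteq> 0} = ?N" by auto
  then have UV2: "UV2 \<omega> \<phi> m' m s = (\<Sum>x\<in>?N. ?c x * exp (\<i> * complex_of_real ((fst x + snd x) * s)))"
    for s unfolding UV2_def case_prod_unfold by simp
  have "((\<lambda>s. ?c x * exp (\<i> * complex_of_real ((fst x + snd x) * s))) has_vector_derivative
      fourier_product \<omega> \<phi> m' m s x) (at s)" if x: "x \<in> ?N" for x
  proof -
    obtain i k \<nu> where "m = (i,k,\<nu>)" by (cases m)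
    then have "snd x \<in> {\<omega> i k, - \<omega> i k}" using x by (auto simp: Omega_def)
    then have "snd x \<noteq> 0" using pos[rule_format, of i k] by auto
    moreover have "fst x + snd x \<noteq> 0" using x by simp
    ultimately have "?c x * (\<i> * complex_of_real (fst x + snd x) * exp (\<i> * complex_of_real ((fst x + snd x) * s)))
        = fourier_product \<omega> \<phi> m' m s x"
      by (simp add: fourier_product_def field_simps power2_eq_square del: of_real_add)
    with has_vector_derivative_mult_right[OF has_vector_derivative_exp_i_mult] show ?thesis
      by metis
  qed
  then show ?thesis
    unfolding UV2 DUV2_def by (intro has_vector_derivative_sum) auto
qed

lemma isCont_UV2: "\<forall>i k. \<omega> i k > 0 \<Longrightarrow> isCont (\<lambda>s. UV2 \<omega> \<phi> m' m s) s0"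
  using has_vector_derivative_UV2 has_vector_derivative_continuous by blast

text \<open>The constants \<open>\<plusminus>1/2\<close> left over from the resonant frequencies; summed against
  second Lie derivatives they reproduce \<open>Y\<close>.\<close>

definition bracket_coeff :: "'N \<times> 'n \<times> nat \<Rightarrow> 'N \<times> 'n \<times> nat \<Rightarrow> complex" where
  "bracket_coeff m1 m2 = (if vert m1 = vert m2 \<and> coord m1 = coord m2 then
     (if kind m1 = 1 \<and> kind m2 = 2 then -1/2 else if kind m1 = 2 \<and> kind m2 = 1 then 1/2 else 0)
   else 0)"

lemma sum_bracket_coeff:
  fixes f :: "'N::finite \<times> 'n::finite \<times> nat \<Rightarrow> 'N \<times> 'n \<times> nat \<Rightarrow> complex"
  shows "(\<Sum>m1\<in>Lambda. \<Sum>m2\<in>Lambda. bracket_coeff m1 m2 * f m2 m1)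
    = (1/2) * (\<Sum>i\<in>UNIV. \<Sum>k\<in>UNIV. f (i,k,1) (i,k,2) - f (i,k,2) (i,k,1))"
proof -
  have delta: "y * (if P then a else 0) = (if P then y * a else 0)" for y a :: complex and P
    by simp
  have delta2: "(\<Sum>i'\<in>UNIV. \<Sum>k'\<in>UNIV. if i = i' \<and> k = k' then g i' k' else 0) = (g i k :: complex)"
    for i :: 'N and k :: 'n and g
  proof -
    have "(\<Sum>k'\<in>UNIV. if i = i' \<and> k = k' then g i' k' else 0) = (if i = i' then g i' k else 0)" for i'
      by (cases "i = i'") (simp_all add: sum.delta)
    then show ?thesis by (simp add: sum.delta)
  qed
  show ?thesis
    by (simp add: sum_Lambda bracket_coeff_def delta delta2
        sum.distrib sum_subtractf sum_negf sum_distrib_left algebra_simps cong: if_cong)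
qed

lemma UV1_mult_u:
  assumes pos: "\<forall>i k. \<omega> i k > 0" and m': "m' \<in> Lambda"
  shows "UV1 \<omega> \<phi> m s * complex_of_real (u \<omega> \<phi> m' s)
    = - (\<Sum>x\<in>Omega \<omega> m' \<times> Omega \<omega> m. fourier_product \<omega> \<phi> m' m s x)"
proof -
  define e where "e w = exp (\<i> * complex_of_real (w * s))" for w
  have u: "complex_of_real (u \<omega> \<phi> m' s) = (\<Sum>w'\<in>Omega \<omega> m'. eta \<omega> \<phi> w' m' * e w')"
    using m' by (rule LambdaE) (use pos in \<open>simp add: u_eq_exp_sum e_def\<close>)
  have prod: "fourier_product \<omega> \<phi> m' m s (w', w)
      = eta \<omega> \<phi> w m / (\<i> * complex_of_real w) * e w * (eta \<omega> \<phi> w' m' * e w')" for w w'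
    by (simp add: fourier_product_def e_def distrib_left distrib_right exp_add mult_ac)
  have "UV1 \<omega> \<phi> m s * complex_of_real (u \<omega> \<phi> m' s) = - (\<Sum>w\<in>Omega \<omega> m. \<Sum>w'\<in>Omega \<omega> m'.
      eta \<omega> \<phi> w m / (\<i> * complex_of_real w) * e w * (eta \<omega> \<phi> w' m' * e w'))"
    by (simp add: UV1_def e_def u sum_product)
  also have "\<dots> = - (\<Sum>x\<in>Omega \<omega> m' \<times> Omega \<omega> m. fourier_product \<omega> \<phi> m' m s x)"
    by (subst sum.swap) (simp add: sum.cartesian_product' prod)
  finally show ?thesis .
qed

lemma UV1_mult_u_plus_DUV2:
  assumes pos: "\<forall>i k. \<omega> i k > 0" and m': "m' \<in> Lambda"
  shows "UV1 \<omega> \<phi> m s * complex_of_real (u \<omega> \<phi> m' s) + DUV2 \<omega> \<phi> m' m s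
    = - (\<Sum>x\<in>{x\<in>Omega \<omega> m' \<times> Omega \<omega> m. fst x + snd x = 0}. fourier_product \<omega> \<phi> m' m s x)"
proof -
  let ?A = "Omega \<omega> m' \<times> Omega \<omega> m" and ?g = "fourier_product \<omega> \<phi> m' m s"
  have "finite ?A" by (cases m; cases m') (simp add: Omega_def)
  then have "(\<Sum>x\<in>?A. ?g x)
      = (\<Sum>x\<in>{x\<in>?A. fst x + snd x \<noteq> 0}. ?g x) + (\<Sum>x\<in>{x\<in>?A. fst x + snd x = 0}. ?g x)"
    by (subst sum.union_disjoint[symmetric]) (auto intro: sum.cong)
  then show ?thesis by (simp add: UV1_mult_u[OF pos m'] DUV2_def)
qed

lemma resonant_fourier_sum:
  assumes pos: "\<forall>i k. \<omega> i k > 0" and inj: "inj (\<lambda>(i,k). \<omega> i k)"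
    and m: "m \<in> Lambda" and m': "m' \<in> Lambda"
  shows "(\<Sum>x\<in>{x\<in>Omega \<omega> m' \<times> Omega \<omega> m. fst x + snd x = 0}. fourier_product \<omega> \<phi> m' m s x)
    = - bracket_coeff m m'"
proof (rule LambdaE[OF m], rule LambdaE[OF m'])
  fix i k \<nu> i' k' \<nu>'
  assume m: "m = (i,k,\<nu>)" "\<nu> \<in> {1,2}" and m': "m' = (i',k',\<nu>')" "\<nu>' \<in> {1,2}"
  let ?R = "{x\<in>Omega \<omega> m' \<times> Omega \<omega> m. fst x + snd x = 0}"
  show ?thesis
  proof (cases "i = i' \<and> k = k'")
    case False
    have "\<omega> i' k' \<noteq> \<omega> i k" using False inj by (auto simp: inj_def)
    then have "?R = {}" using pos[rule_format, of i k] pos[rule_format, of i' k']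
      by (auto simp: m m' Omega_def)
    moreover have "bracket_coeff m m' = 0" using False by (simp add: m m' bracket_coeff_def)
    ultimately show ?thesis by (metis minus_zero sum.empty)
  next
    case True
    define a where "a = \<omega> i k"
    have a: "a > 0" using pos by (simp add: a_def)
    then have "?R = {(a, -a), (-a, a)}" using True by (auto simp: m m' Omega_def a_def)
    then have "(\<Sum>x\<in>?R. fourier_product \<omega> \<phi> m' m s x)
        = fourier_product \<omega> \<phi> m' m s (a, -a) + fourier_product \<omega> \<phi> m' m s (-a, a)"
      using a by simp
    also have "\<dots> = - bracket_coeff m m'"
      using eta_resonant_sum[of \<omega> i k \<nu> \<nu>' \<phi>] pos m m' True
      by (auto simp: fourier_product_def bracket_coeff_def a_def)
    finally show ?thesis .
  qed
qed

lemma UV1_mult_u_plus_DUV2_eq_bracket_coeff: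
  assumes "\<forall>i k. \<omega> i k > 0" "inj (\<lambda>(i,k). \<omega> i k)" "m \<in> Lambda" "m' \<in> Lambda"
  shows "UV1 \<omega> \<phi> m s * complex_of_real (u \<omega> \<phi> m' s) + DUV2 \<omega> \<phi> m' m s = bracket_coeff m m'"
  using UV1_mult_u_plus_DUV2[OF assms(1,4)] resonant_fourier_sum[OF assms] by simp

section \<open>Differentiating along a solution\<close>

lemma has_vector_derivative_lie_comp:
  fixes F :: "'a::real_normed_vector \<Rightarrow> real"
  assumes F: "(F has_derivative DF) (at (\<gamma> s))"
    and \<gamma>: "(\<gamma> has_vector_derivative (\<Sum>m\<in>L. c m *\<^sub>R X m (\<gamma> s))) (at s)"
  shows "((\<lambda>s. complex_of_real (F (\<gamma> s))) has_vector_derivative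
           complex_of_real (\<Sum>m\<in>L. c m * lie (X m) F (\<gamma> s))) (at s)"
proof -
  let ?V = "\<Sum>m\<in>L. c m *\<^sub>R X m (\<gamma> s)"
  have lin: "linear DF" using F has_derivative_linear by blast
  have "((\<lambda>x. F (\<gamma> x)) has_derivative (\<lambda>x. DF (x *\<^sub>R ?V))) (at s)"
    using has_derivative_compose[OF \<gamma>[unfolded has_vector_derivative_def] F] .
  moreover have "(\<lambda>x. DF (x *\<^sub>R ?V)) = (*) (DF ?V)"
    by (rule ext) (simp add: linear_scale[OF lin])
  moreover have "DF ?V = (\<Sum>m\<in>L. c m * lie (X m) F (\<gamma> s))"
    by (simp add: linear_sum[OF lin] linear_scale[OF lin] lie_def frechet_derivative_at[OF F, symmetric])
  ultimately show ?thesis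
    by (intro has_vector_derivative_of_real) (simp add: has_field_derivative_def)
qed

context control_fields
begin

lemma D1psi_eq:
  "D1psi h b E d \<omega> \<phi> s p =
     - (\<Sum>m1\<in>Lambda. UV1 \<omega> \<phi> m1 s * complex_of_real (lie1 m1 p))
     - (\<Sum>m1\<in>Lambda. \<Sum>m2\<in>Lambda. UV2 \<omega> \<phi> m2 m1 s * complex_of_real (lie2 m2 m1 p))"
  unfolding D1psi_def lie_Xf_psi by (simp add: lie_Xf_lie1 cong: sum.cong)

lemma D2psi_eq:
  "D2psi h b E d \<omega> \<phi> s p =
     (\<Sum>m1\<in>Lambda. \<Sum>m2\<in>Lambda. \<Sum>m3\<in>Lambda.
        complex_of_real (u \<omega> \<phi> m3 s) * UV2 \<omega> \<phi> m2 m1 s * complex_of_real (lie3 m3 m2 m1 p))"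
  unfolding D2psi_def lie_Xf_psi by (simp add: lie_Xf_lie1 lie_Xf_lie2 cong: sum.cong)

lemma lie_Yf_psi_eq_bracket_sum:
  "complex_of_real (lie (Yf h b E d) (psi E d) p)
     = (\<Sum>m1\<in>Lambda. \<Sum>m2\<in>Lambda. bracket_coeff m1 m2 * complex_of_real (lie2 m2 m1 p))"
  by (simp add: sum_bracket_coeff lie_Yf_psi sum_subtractf)

lemma derivative_terms_collapse:
  assumes pos: "\<forall>i k. \<omega> i k > 0" and inj: "inj (\<lambda>(i,k). \<omega> i k)"
  shows "complex_of_real (\<Sum>m\<in>Lambda. u \<omega> \<phi> m s * lie1 m p)
     + (\<Sum>m1\<in>Lambda. UV1 \<omega> \<phi> m1 s * complex_of_real (\<Sum>m\<in>Lambda. u \<omega> \<phi> m s * lie2 m m1 p)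
          + - complex_of_real (u \<omega> \<phi> m1 s) * complex_of_real (lie1 m1 p))
     + (\<Sum>m1\<in>Lambda. \<Sum>m2\<in>Lambda.
          UV2 \<omega> \<phi> m2 m1 s * complex_of_real (\<Sum>m\<in>Lambda. u \<omega> \<phi> m s * lie3 m m2 m1 p)
          + DUV2 \<omega> \<phi> m2 m1 s * complex_of_real (lie2 m2 m1 p))
   = complex_of_real (lie (Yf h b E d) (psi E d) p) + D2psi h b E d \<omega> \<phi> s p"
proof -
  let ?cu = "\<lambda>m. complex_of_real (u \<omega> \<phi> m s)" and ?F2 = "\<lambda>m2 m1. complex_of_real (lie2 m2 m1 p)"
  have first_order: "(\<Sum>m1\<in>Lambda. UV1 \<omega> \<phi> m1 s * complex_of_real (\<Sum>m\<in>Lambda. u \<omega> \<phi> m s * lie2 m m1 p)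
          + - ?cu m1 * complex_of_real (lie1 m1 p))
      = (\<Sum>m1\<in>Lambda. \<Sum>m2\<in>Lambda. UV1 \<omega> \<phi> m1 s * ?cu m2 * ?F2 m2 m1)
        - complex_of_real (\<Sum>m\<in>Lambda. u \<omega> \<phi> m s * lie1 m p)"
    by (simp add: sum.distrib sum_negf sum_distrib_left mult.assoc sum_subtractf)
  have third_order: "(\<Sum>m1\<in>Lambda. \<Sum>m2\<in>Lambda.
          UV2 \<omega> \<phi> m2 m1 s * complex_of_real (\<Sum>m\<in>Lambda. u \<omega> \<phi> m s * lie3 m m2 m1 p)
          + DUV2 \<omega> \<phi> m2 m1 s * ?F2 m2 m1)
      = D2psi h b E d \<omega> \<phi> s p + (\<Sum>m1\<in>Lambda. \<Sum>m2\<in>Lambda. DUV2 \<omega> \<phi> m2 m1 s * ?F2 m2 m1)"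
    unfolding D2psi_eq by (simp add: sum.distrib sum_distrib_left mult_ac)
  have "(\<Sum>m1\<in>Lambda. \<Sum>m2\<in>Lambda. UV1 \<omega> \<phi> m1 s * ?cu m2 * ?F2 m2 m1)
        + (\<Sum>m1\<in>Lambda. \<Sum>m2\<in>Lambda. DUV2 \<omega> \<phi> m2 m1 s * ?F2 m2 m1)
      = (\<Sum>m1\<in>Lambda. \<Sum>m2\<in>Lambda. (UV1 \<omega> \<phi> m1 s * ?cu m2 + DUV2 \<omega> \<phi> m2 m1 s) * ?F2 m2 m1)"
    by (simp add: sum.distrib[symmetric] distrib_right)
  also have "\<dots> = complex_of_real (lie (Yf h b E d) (psi E d) p)"
    unfolding lie_Yf_psi_eq_bracket_sum
    by (intro sum.cong refl) (simp add: UV1_mult_u_plus_DUV2_eq_bracket_coeff[OF pos inj])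
  finally show ?thesis unfolding first_order third_order by (simp add: algebra_simps)
qed

lemma has_vector_derivative_lie_expansion:
  assumes pos: "\<forall>i k. \<omega> i k > 0"
    and \<gamma>: "(\<gamma> has_vector_derivative (\<Sum>m\<in>Lambda. u \<omega> \<phi> m s *\<^sub>R Xf h b E d m (\<gamma> s))) (at s)"
  shows "((\<lambda>s. complex_of_real (psi E d (\<gamma> s))
      + (\<Sum>m1\<in>Lambda. UV1 \<omega> \<phi> m1 s * complex_of_real (lie1 m1 (\<gamma> s)))
      + (\<Sum>m1\<in>Lambda. \<Sum>m2\<in>Lambda. UV2 \<omega> \<phi> m2 m1 s * complex_of_real (lie2 m2 m1 (\<gamma> s))))
    has_vector_derivative
      complex_of_real (\<Sum>m\<in>Lambda. u \<omega> \<phi> m s * lie1 m (\<gamma> s))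
      + (\<Sum>m1\<in>Lambda. UV1 \<omega> \<phi> m1 s * complex_of_real (\<Sum>m\<in>Lambda. u \<omega> \<phi> m s * lie2 m m1 (\<gamma> s))
          + - complex_of_real (u \<omega> \<phi> m1 s) * complex_of_real (lie1 m1 (\<gamma> s)))
      + (\<Sum>m1\<in>Lambda. \<Sum>m2\<in>Lambda.
          UV2 \<omega> \<phi> m2 m1 s * complex_of_real (\<Sum>m\<in>Lambda. u \<omega> \<phi> m s * lie3 m m2 m1 (\<gamma> s))
          + DUV2 \<omega> \<phi> m2 m1 s * complex_of_real (lie2 m2 m1 (\<gamma> s)))) (at s)"
proof (intro has_vector_derivative_add has_vector_derivative_sum)
  note lie_comp = has_vector_derivative_lie_comp[where X="Xf h b E d" and c="\<lambda>m. u \<omega> \<phi> m s"]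
  show "((\<lambda>s. complex_of_real (psi E d (\<gamma> s))) has_vector_derivative
      complex_of_real (\<Sum>m\<in>Lambda. u \<omega> \<phi> m s * lie1 m (\<gamma> s))) (at s)"
    using lie_comp[OF has_derivative_psi[of "\<gamma> s"] \<gamma>] by (simp add: lie_Xf_psi)
  fix m1 :: "'N \<times> 'n \<times> nat" assume m1: "m1 \<in> Lambda"
  have "((\<lambda>s. complex_of_real (lie1 m1 (\<gamma> s))) has_vector_derivative
      complex_of_real (\<Sum>m\<in>Lambda. u \<omega> \<phi> m s * lie2 m m1 (\<gamma> s))) (at s)"
    using lie_comp[OF has_derivative_lie1[OF m1, of "\<gamma> s"] \<gamma>]
    by (simp add: lie_Xf_lie1[OF m1])
  then show "((\<lambda>s. UV1 \<omega> \<phi> m1 s * complex_of_real (lie1 m1 (\<gamma> s))) has_vector_derivative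
      UV1 \<omega> \<phi> m1 s * complex_of_real (\<Sum>m\<in>Lambda. u \<omega> \<phi> m s * lie2 m m1 (\<gamma> s))
      + - complex_of_real (u \<omega> \<phi> m1 s) * complex_of_real (lie1 m1 (\<gamma> s))) (at s)"
    by (rule has_vector_derivative_mult[OF has_vector_derivative_UV1[OF pos m1]])
  fix m2 :: "'N \<times> 'n \<times> nat" assume m2: "m2 \<in> Lambda"
  have "((\<lambda>s. complex_of_real (lie2 m2 m1 (\<gamma> s))) has_vector_derivative
      complex_of_real (\<Sum>m\<in>Lambda. u \<omega> \<phi> m s * lie3 m m2 m1 (\<gamma> s))) (at s)"
    using lie_comp[OF has_derivative_lie2[OF m1 m2, of "\<gamma> s"] \<gamma>]
    by (simp add: lie_Xf_lie2[OF m1 m2])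
  then show "((\<lambda>s. UV2 \<omega> \<phi> m2 m1 s * complex_of_real (lie2 m2 m1 (\<gamma> s))) has_vector_derivative
      UV2 \<omega> \<phi> m2 m1 s * complex_of_real (\<Sum>m\<in>Lambda. u \<omega> \<phi> m s * lie3 m m2 m1 (\<gamma> s))
      + DUV2 \<omega> \<phi> m2 m1 s * complex_of_real (lie2 m2 m1 (\<gamma> s))) (at s)"
    by (rule has_vector_derivative_mult[OF has_vector_derivative_UV2[OF pos]])
qed

lemma has_vector_derivative_psi_minus_D1psi:
  assumes pos: "\<forall>i k. \<omega> i k > 0" and inj: "inj (\<lambda>(i,k). \<omega> i k)"
    and \<gamma>: "(\<gamma> has_vector_derivative (\<Sum>m\<in>Lambda. u \<omega> \<phi> m s *\<^sub>R Xf h b E d m (\<gamma> s))) (at s)"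
  shows "((\<lambda>s. complex_of_real (psi E d (\<gamma> s)) - D1psi h b E d \<omega> \<phi> s (\<gamma> s)) has_vector_derivative
     (complex_of_real (lie (Yf h b E d) (psi E d) (\<gamma> s)) + D2psi h b E d \<omega> \<phi> s (\<gamma> s))) (at s)"
proof -
  have "(\<lambda>s. complex_of_real (psi E d (\<gamma> s)) - D1psi h b E d \<omega> \<phi> s (\<gamma> s))
      = (\<lambda>s. complex_of_real (psi E d (\<gamma> s))
          + (\<Sum>m1\<in>Lambda. UV1 \<omega> \<phi> m1 s * complex_of_real (lie1 m1 (\<gamma> s)))
          + (\<Sum>m1\<in>Lambda. \<Sum>m2\<in>Lambda. UV2 \<omega> \<phi> m2 m1 s * complex_of_real (lie2 m2 m1 (\<gamma> s))))"
    by (simp add: fun_eq_iff D1psi_eq)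
  then show ?thesis
    using has_vector_derivative_lie_expansion[OF pos \<gamma>]
    unfolding derivative_terms_collapse[OF pos inj] by simp
qed

lemma psi_along_solution:
  assumes pos: "\<forall>i k. \<omega> i k > 0" and inj: "inj (\<lambda>(i,k). \<omega> i k)"
    and \<gamma>: "\<forall>s. (\<gamma> has_vector_derivative
        (\<Sum>m\<in>Lambda. u \<omega> \<phi> m s *\<^sub>R Xf h b E d m (\<gamma> s))) (at s)"
  shows "complex_of_real (psi E d (\<gamma> t)) - D1psi h b E d \<omega> \<phi> t (\<gamma> t)
      = complex_of_real (psi E d (\<gamma> t0)) - D1psi h b E d \<omega> \<phi> t0 (\<gamma> t0)
        + complex_of_real (LBINT s=t0..t. lie (Yf h b E d) (psi E d) (\<gamma> s))
        + (LBINT s=t0..t. D2psi h b E d \<omega> \<phi> s (\<gamma> s))"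
proof -
  define G where "G s = complex_of_real (psi E d (\<gamma> s)) - D1psi h b E d \<omega> \<phi> s (\<gamma> s)" for s
  define Y where "Y s = lie (Yf h b E d) (psi E d) (\<gamma> s)" for s
  define D2 where "D2 s = D2psi h b E d \<omega> \<phi> s (\<gamma> s)" for s
  have \<gamma>_cont: "isCont \<gamma> s" for s
    using \<gamma> has_vector_derivative_continuous by blast
  have in_Lambda: "(i,k,\<nu>) \<in> Lambda" if "\<nu> \<in> {1,2}" for i k \<nu> using that by (simp add: Lambda_def)
  have Y_cont: "isCont (\<lambda>s. complex_of_real (Y s)) s" for s
    unfolding Y_def lie_Yf_psi
    by (intro continuous_of_real isCont_mult continuous_const isCont_sum ballI isCont_diff
        isCont_o2[OF \<gamma>_cont isCont_lie2] in_Lambda) simp_all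
  have D2_cont: "isCont D2 s" for s
    unfolding D2_def[abs_def] D2psi_eq
    by (intro isCont_sum ballI isCont_mult isCont_u isCont_UV2[OF pos] continuous_of_real
        isCont_o2[OF \<gamma>_cont isCont_lie3])
  have "(LBINT s=t0..t. complex_of_real (Y s) + D2 s) = G t - G t0"
  proof (rule interval_integral_FTC_finite)
    show "continuous_on {min t0 t..max t0 t} (\<lambda>s. complex_of_real (Y s) + D2 s)"
      by (intro continuous_at_imp_continuous_on ballI isCont_add Y_cont D2_cont)
    show "(G has_vector_derivative complex_of_real (Y s) + D2 s) (at s within {min t0 t..max t0 t})" for s
      unfolding G_def[abs_def] Y_def D2_def
      by (rule has_vector_derivative_at_within[OF has_vector_derivative_psi_minus_D1psi[OF pos inj \<gamma>[rule_format]]])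
  qed
  also have "(LBINT s=t0..t. complex_of_real (Y s) + D2 s)
      = complex_of_real (LBINT s=t0..t. Y s) + (LBINT s=t0..t. D2 s)"
    by (simp add: interval_lebesgue_integral_add(2) interval_integrable_isCont Y_cont D2_cont
        interval_lebesgue_integral_of_real)
  finally show ?thesis unfolding G_def Y_def D2_def by (simp add: algebra_simps)
qed

end

theorem proposition5p6:
  fixes E :: "'N::finite set set"
    and d :: "'N set \<Rightarrow> real"
    and b :: "'N \<Rightarrow> 'n::finite \<Rightarrow> real^'n"
    and h :: "nat \<Rightarrow> real \<Rightarrow> real"
    and \<omega> \<phi> :: "'N \<Rightarrow> 'n \<Rightarrow> real"
    and \<gamma> :: "real \<Rightarrow> (real^'n)^'N"
    and t0 t :: real
  assumes E_ne: "E \<noteq> {}"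
    and E_edges: "\<forall>e\<in>E. card e = 2"
    and d_nonneg: "\<forall>e\<in>E. d e \<ge> 0"
    and b_orthonormal: "\<forall>i k l. b i k \<bullet> b i l = (if k = l then 1 else 0)"
    and h_zero: "\<forall>\<nu>\<in>{1,2}. \<forall>y\<le>0. h \<nu> y = 0"
    and h_bounded: "\<forall>\<nu>\<in>{1,2}. bounded (range (h \<nu>))"
    and h_C2: "\<forall>\<nu>\<in>{1,2}. C2_pos (h \<nu>)"
    and h_div: "\<forall>\<nu>\<in>{1,2}. \<exists>C. eventually (\<lambda>y. \<bar>h \<nu> y / y\<bar> \<le> C) (at_right 0)"
    and h_d1: "\<forall>\<nu>\<in>{1,2}. \<exists>C. eventually (\<lambda>y. \<bar>deriv (h \<nu>) y\<bar> \<le> C) (at_right 0)"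
    and h_d2: "\<forall>\<nu>\<in>{1,2}. \<exists>C. eventually (\<lambda>y. \<bar>deriv (deriv (h \<nu>)) y * y\<bar> \<le> C) (at_right 0)"
    and h_wronski: "\<exists>r' c'. r' > 0 \<and> c' > 0 \<and> (\<forall>y\<in>{0<..r'}.
        deriv (h 2) y * h 1 y - deriv (h 1) y * h 2 y \<le> - c' * y)"
    and \<omega>_pos: "\<forall>i k. \<omega> i k > 0"
    and \<omega>_distinct: "inj (\<lambda>(i,k). \<omega> i k)"
    and \<gamma>_sol: "\<forall>s. (\<gamma> has_vector_derivative
        (\<Sum>m\<in>Lambda. u \<omega> \<phi> m s *\<^sub>R Xf h b E d m (\<gamma> s))) (at s)"
  shows "complex_of_real (psi E d (\<gamma> t)) =
      complex_of_real (psi E d (\<gamma> t0))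
      + complex_of_real (LBINT s=t0..t. lie (Yf h b E d) (psi E d) (\<gamma> s))
      - D1psi h b E d \<omega> \<phi> t0 (\<gamma> t0)
      + D1psi h b E d \<omega> \<phi> t (\<gamma> t)
      + (LBINT s=t0..t. D2psi h b E d \<omega> \<phi> s (\<gamma> s))"
proof -
  interpret control_fields E d b h
    by unfold_locales (fact E_edges h_zero h_C2 h_div h_d1 h_d2)+
  show ?thesis
    using psi_along_solution[OF \<omega>_pos \<omega>_distinct \<gamma>_sol, of t t0] by (simp add: algebra_simps)
qed

end
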